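(* Let $d\ge2$, let $\Omega\subseteq\mathbb{R}^d$ be a bounded open set, let $K\subseteq\Omega$ be compact with $\mathrm{Cap}_\Omega(K)=0$, and let $\{K_\varepsilon\}_{\varepsilon>0}$ be compact subsets of $\Omega$ concentrating to $K$. Let $E(\lambda_N)$ be the eigenspace of a Dirichlet eigenvalue $\lambda_N$ of $\Omega$ and \[ \chi_\varepsilon^2\equiv\sup\{\mathrm{Cap}_\Omega(K_\varepsilon,u):u\in E(\lambda_N),\ \|u\|_{L^2(\Omega)}=1\}. \] Then $\chi_\varepsilon\to0$ as $\varepsilon\to0$.
   Context: $H^1_0(\Omega\setminus K)$ is viewed inside $H^1_0(\Omega)$ by extension by zero. $\mathrm{Cap}_\Omega(K)=\inf\{\int_\Omega|\nabla f|^2dx:f\in H^1_0(\Omega),\ f-\eta_K\in H^1_0(\Omega\setminus K)\}$ with $\eta_K$ smooth, supported in $\Omega$, equal to $1$ near $K$. For $u\in H^1_0(\Omega)$, $V_{K,u}$ is the unique minimizer of $\int_\Omega|\nabla f|^2dx$ over $\{f\in H^1_0(\Omega):f-u\in H^1_0(\Omega\setminus K)\}$ and $\mathrm{Cap}_\Omega(K,u)=\int_\Omega|\nabla V_{K,u}|^2dx$. The family $\{K_\varepsilon\}$ concentrates to $K$ if for every open $U$ with $K\subseteq U\subseteq\Omega$ there is $\varepsilon_U>0$ with $K_\varepsilon\subseteq U$ for all $\varepsilon<\varepsilon_U$. *)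

theory Defs
  imports "HOL-Analysis.Analysis"
begin

definition cc1_fun :: "'a::euclidean_space set \<Rightarrow> ('a \<Rightarrow> real) \<Rightarrow> ('a \<Rightarrow> 'a) \<Rightarrow> bool" where
  "cc1_fun U \<phi> G \<longleftrightarrow>
     (\<forall>x. (\<phi> has_derivative (\<lambda>h. G x \<bullet> h)) (at x)) \<and> continuous_on UNIV G \<and>
     (\<exists>C. compact C \<and> C \<subseteq> U \<and> (\<forall>x. x \<notin> C \<longrightarrow> \<phi> x = 0))"

text \<open>f belongs to H^1_0(U) (closure of test functions in the H^1 norm), with weak gradient g.\<close>
definition H10_grad :: "'a::euclidean_space set \<Rightarrow> ('a \<Rightarrow> real) \<Rightarrow> ('a \<Rightarrow> 'a) \<Rightarrow> bool" where
  "H10_grad U f g \<longleftrightarrow>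
     f \<in> borel_measurable lborel \<and> g \<in> borel_measurable lborel \<and>
     (\<exists>\<phi> G. (\<forall>n. cc1_fun U (\<phi> n) (G n)) \<and>
        (\<lambda>n. \<integral>\<^sup>+ x. ennreal ((f x - \<phi> n x)\<^sup>2) \<partial>lborel) \<longlonglongrightarrow> 0 \<and>
        (\<lambda>n. \<integral>\<^sup>+ x. ennreal ((norm (g x - G n x))\<^sup>2) \<partial>lborel) \<longlonglongrightarrow> 0)"

definition H10 :: "'a::euclidean_space set \<Rightarrow> ('a \<Rightarrow> real) set" where
  "H10 U = {f. \<exists>g. H10_grad U f g}"

text \<open>Dirichlet energy \<integral>|\<nabla>f|^2 of f \<in> H^1_0(U) (the weak gradient is unique a.e.).\<close>
definition dir_energy :: "'a::euclidean_space set \<Rightarrow> ('a \<Rightarrow> real) \<Rightarrow> ennreal" where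
  "dir_energy U f = (\<integral>\<^sup>+ x. ennreal ((norm ((SOME g. H10_grad U f g) x))\<^sup>2) \<partial>lborel)"

text \<open>Cap_\<Omega>(K): infimum of the energy over f \<in> H^1_0(\<Omega>) with f - \<eta>_K \<in> H^1_0(\<Omega>\<setminus>K),
  \<eta>_K a (C^1) test function in \<Omega> equal to 1 near K (value independent of the choice of \<eta>_K).\<close>
definition cap :: "'a::euclidean_space set \<Rightarrow> 'a set \<Rightarrow> ennreal" where
  "cap \<Omega> K = Inf {dir_energy \<Omega> f | f. f \<in> H10 \<Omega> \<and>
      (\<exists>\<eta> G V. cc1_fun \<Omega> \<eta> G \<and> open V \<and> K \<subseteq> V \<and> (\<forall>x\<in>V. \<eta> x = 1) \<and>
               (\<lambda>x. f x - \<eta> x) \<in> H10 (\<Omega> - K))}"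

text \<open>Cap_\<Omega>(K,u) = \<integral>|\<nabla>V_{K,u}|^2, V_{K,u} the minimizer; i.e. the minimum (= infimum) of the energy
  over the affine set {f \<in> H^1_0(\<Omega>). f - u \<in> H^1_0(\<Omega>\<setminus>K)}.\<close>
definition cap_u :: "'a::euclidean_space set \<Rightarrow> 'a set \<Rightarrow> ('a \<Rightarrow> real) \<Rightarrow> ennreal" where
  "cap_u \<Omega> K u = Inf {dir_energy \<Omega> f | f. f \<in> H10 \<Omega> \<and> (\<lambda>x. f x - u x) \<in> H10 (\<Omega> - K)}"

definition dirichlet_eigenspace :: "'a::euclidean_space set \<Rightarrow> real \<Rightarrow> ('a \<Rightarrow> real) set" where
  "dirichlet_eigenspace \<Omega> lam = {u. \<exists>g. H10_grad \<Omega> u g \<and>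
      (\<forall>v h. H10_grad \<Omega> v h \<longrightarrow>
         (\<integral>x. g x \<bullet> h x \<partial>lborel) = lam * (\<integral>x. u x * v x \<partial>lborel))}"

definition dirichlet_eigenvalue :: "'a::euclidean_space set \<Rightarrow> real \<Rightarrow> bool" where
  "dirichlet_eigenvalue \<Omega> lam \<longleftrightarrow>
     (\<exists>u \<in> dirichlet_eigenspace \<Omega> lam. \<not> (AE x in lborel. u x = 0))"

definition concentrates_to :: "(real \<Rightarrow> 'a::euclidean_space set) \<Rightarrow> 'a set \<Rightarrow> 'a set \<Rightarrow> bool" where
  "concentrates_to Ks K \<Omega> \<longleftrightarrow>
     (\<forall>U. open U \<and> K \<subseteq> U \<and> U \<subseteq> \<Omega> \<longrightarrow>
        (\<exists>eU>0. \<forall>\<epsilon>. 0 < \<epsilon> \<and> \<epsilon> < eU \<longrightarrow> Ks \<epsilon> \<subseteq> U))"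

definition chi_sq :: "'a::euclidean_space set \<Rightarrow> real \<Rightarrow> 'a set \<Rightarrow> ennreal" where
  "chi_sq \<Omega> lam Ke = Sup {cap_u \<Omega> Ke u | u. u \<in> dirichlet_eigenspace \<Omega> lam \<and>
                              (\<integral>\<^sup>+ x. ennreal ((u x)\<^sup>2) \<partial>lborel) = 1}"

end

theory Submission
  imports Defs
begin

(* Normalised eigenfunctions u, v for the same eigenvalue lam satisfy
   |grad u - grad v|^2 = lam |u - v|^2, and they form a bounded subset of H^1_0(Omega), which is
   totally bounded in L^2 by Rellich's theorem. Here Rellich is proved by comparing u with its
   averages over a grid of cubes of side r: by the translation estimate
   |u(. + h) - u|^2 <= 6 |h|^2 |grad u|^2 the error is O(r^2), and the averages over the finitely
   many cubes meeting Omega can be quantised. Hence finitely many normalised eigenfunctions v_i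
   approximate all of them in energy.
   Since Cap_Omega(K) = 0, each grad v_i is L^2-close to the gradient of a test function w_i
   supported in a compact subset of Omega - K. Once K_eps avoids these finitely many supports,
   u - w_i is admissible for Cap_Omega(K_eps, u), which is thus at most
   2 |grad u - grad v_i|^2 + 2 |grad v_i - grad w_i|^2. *)

section \<open>Test functions\<close>

lemma cc1_fun_has_derivative: "cc1_fun U \<phi> G \<Longrightarrow> (\<phi> has_derivative (\<lambda>h. G x \<bullet> h)) (at x)"
  unfolding cc1_fun_def by blast

lemma cc1_fun_continuous: "cc1_fun U \<phi> G \<Longrightarrow> continuous_on S \<phi>"
  by (meson cc1_fun_has_derivative continuous_at_imp_continuous_on has_derivative_continuous)

lemma cc1_fun_gradient_continuous: "cc1_fun U \<phi> G \<Longrightarrow> continuous_on S G"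
  unfolding cc1_fun_def using continuous_on_subset by blast

lemma cc1_fun_measurable: "cc1_fun U \<phi> G \<Longrightarrow> \<phi> \<in> borel_measurable borel"
  and cc1_fun_gradient_measurable: "cc1_fun U \<phi> G \<Longrightarrow> G \<in> borel_measurable borel"
  by (intro borel_measurable_continuous_onI cc1_fun_continuous cc1_fun_gradient_continuous; assumption)+

lemma cc1_fun_support:
  assumes "cc1_fun U \<phi> G"
  obtains C where "compact C" "C \<subseteq> U" "\<And>x. x \<notin> C \<Longrightarrow> \<phi> x = 0" "\<And>x. x \<notin> C \<Longrightarrow> G x = 0"
proof -
  obtain C where C: "compact C" "C \<subseteq> U" "\<And>x. x \<notin> C \<Longrightarrow> \<phi> x = 0"
    using assms unfolding cc1_fun_def by blast
  have "G x = 0" if "x \<notin> C" for x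
  proof -
    have "open (- C)" using C(1) compact_imp_closed by blast
    then have "((\<lambda>_. 0) has_derivative (\<lambda>h. G x \<bullet> h)) (at x)"
      by (rule has_derivative_transform_within_open[OF cc1_fun_has_derivative[OF assms]])
        (use C(3) that in auto)
    then have "(\<lambda>h. G x \<bullet> h) = (\<lambda>h. 0)"
      using has_derivative_const by (rule has_derivative_unique)
    then have "G x \<bullet> G x = 0" by metis
    then show ?thesis by simp
  qed
  with C that show ?thesis by blast
qed

lemma cc1_fun_bounded:
  assumes "cc1_fun U \<phi> G"
  obtains M where "M > 0" "\<And>x. \<bar>\<phi> x\<bar> \<le> M" "\<And>x. norm (G x) \<le> M"
proof -
  obtain C where C: "compact C" "C \<subseteq> U" "\<And>x. x \<notin> C \<Longrightarrow> \<phi> x = 0" "\<And>x. x \<notin> C \<Longrightarrow> G x = 0"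
    using cc1_fun_support[OF assms] by blast
  obtain M1 where M1: "\<And>x. x \<in> C \<Longrightarrow> norm (\<phi> x) \<le> M1"
    using compact_imp_bounded[OF compact_continuous_image[OF cc1_fun_continuous[OF assms] C(1)]]
    unfolding bounded_iff by auto
  obtain M2 where M2: "\<And>x. x \<in> C \<Longrightarrow> norm (G x) \<le> M2"
    using compact_imp_bounded[OF compact_continuous_image[OF cc1_fun_gradient_continuous[OF assms] C(1)]]
    unfolding bounded_iff by auto
  show ?thesis
  proof (rule that[of "1 + \<bar>M1\<bar> + \<bar>M2\<bar>"])
    fix x
    show "\<bar>\<phi> x\<bar> \<le> 1 + \<bar>M1\<bar> + \<bar>M2\<bar>" using M1[of x] C(3)[of x] by (cases "x \<in> C") auto
    show "norm (G x) \<le> 1 + \<bar>M1\<bar> + \<bar>M2\<bar>" using M2[of x] C(4)[of x] by (cases "x \<in> C") auto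
  qed auto
qed

lemma cc1_fun_mono: "cc1_fun U \<phi> G \<Longrightarrow> U \<subseteq> V \<Longrightarrow> cc1_fun V \<phi> G"
  unfolding cc1_fun_def by blast

lemma cc1_fun_supported_in:
  "cc1_fun U \<phi> G \<Longrightarrow> compact C \<Longrightarrow> C \<subseteq> V \<Longrightarrow> (\<And>x. x \<notin> C \<Longrightarrow> \<phi> x = 0) \<Longrightarrow> cc1_fun V \<phi> G"
  unfolding cc1_fun_def by blast

lemma cc1_fun_add:
  assumes "cc1_fun U \<phi> G" "cc1_fun U \<psi> H"
  shows "cc1_fun U (\<lambda>x. \<phi> x + \<psi> x) (\<lambda>x. G x + H x)"
proof -
  obtain C where "compact C" "C \<subseteq> U" "\<And>x. x \<notin> C \<Longrightarrow> \<phi> x = 0"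
    using assms(1) unfolding cc1_fun_def by blast
  moreover obtain D where "compact D" "D \<subseteq> U" "\<And>x. x \<notin> D \<Longrightarrow> \<psi> x = 0"
    using assms(2) unfolding cc1_fun_def by blast
  moreover have "((\<lambda>x. \<phi> x + \<psi> x) has_derivative (\<lambda>h. (G x + H x) \<bullet> h)) (at x)" for x
    using has_derivative_add[OF cc1_fun_has_derivative[OF assms(1)] cc1_fun_has_derivative[OF assms(2)]]
    by (simp add: inner_add_left)
  ultimately show ?thesis
    using assms unfolding cc1_fun_def
    by (intro conjI allI exI[of _ "C \<union> D"] continuous_intros) auto
qed

lemma cc1_fun_scale:
  assumes "cc1_fun U \<phi> G"
  shows "cc1_fun U (\<lambda>x. c * \<phi> x) (\<lambda>x. c *\<^sub>R G x)"
  unfolding cc1_fun_def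
proof (intro conjI allI)
  fix x
  show "((\<lambda>x. c * \<phi> x) has_derivative (\<lambda>h. (c *\<^sub>R G x) \<bullet> h)) (at x)"
    using has_derivative_mult_right[OF cc1_fun_has_derivative[OF assms], of c] by simp
  show "continuous_on UNIV (\<lambda>x. c *\<^sub>R G x)"
    using cc1_fun_gradient_continuous[OF assms] by (intro continuous_intros)
  show "\<exists>C. compact C \<and> C \<subseteq> U \<and> (\<forall>x. x \<notin> C \<longrightarrow> c * \<phi> x = 0)"
    using assms unfolding cc1_fun_def by auto
qed

lemma cc1_fun_diff:
  assumes "cc1_fun U \<phi> G" "cc1_fun U \<psi> H"
  shows "cc1_fun U (\<lambda>x. \<phi> x - \<psi> x) (\<lambda>x. G x - H x)"
  using cc1_fun_add[OF assms(1) cc1_fun_scale[OF assms(2), of "-1"]] by simp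

lemma cc1_fun_mult:
  assumes "cc1_fun U \<phi> G" "\<And>x. (\<eta> has_derivative (\<lambda>h. H x \<bullet> h)) (at x)" "continuous_on UNIV H"
  shows "cc1_fun U (\<lambda>x. \<phi> x * \<eta> x) (\<lambda>x. \<eta> x *\<^sub>R G x + \<phi> x *\<^sub>R H x)"
  unfolding cc1_fun_def
proof (intro conjI allI)
  fix x
  show "((\<lambda>x. \<phi> x * \<eta> x) has_derivative (\<lambda>h. (\<eta> x *\<^sub>R G x + \<phi> x *\<^sub>R H x) \<bullet> h)) (at x)"
    using has_derivative_mult[OF cc1_fun_has_derivative[OF assms(1)] assms(2)]
    by (simp add: inner_add_left algebra_simps)
  have "continuous_on UNIV \<eta>"
    using assms(2) by (meson continuous_at_imp_continuous_on has_derivative_continuous)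
  then show "continuous_on UNIV (\<lambda>x. \<eta> x *\<^sub>R G x + \<phi> x *\<^sub>R H x)"
    using assms(3) cc1_fun_continuous[OF assms(1)] cc1_fun_gradient_continuous[OF assms(1)]
    by (intro continuous_intros)
  show "\<exists>C. compact C \<and> C \<subseteq> U \<and> (\<forall>x. x \<notin> C \<longrightarrow> \<phi> x * \<eta> x = 0)"
    using assms(1) unfolding cc1_fun_def by (metis mult_zero_left)
qed

lemma cc1_fun_mult_vanishing:
  assumes "cc1_fun U \<phi> G" "\<And>x. (\<psi> has_derivative (\<lambda>h. H x \<bullet> h)) (at x)" "continuous_on UNIV H"
    and "open V" "\<And>x. x \<in> V \<Longrightarrow> \<psi> x = 0"
  shows "cc1_fun (U - V) (\<lambda>x. \<phi> x * \<psi> x) (\<lambda>x. \<psi> x *\<^sub>R G x + \<phi> x *\<^sub>R H x)"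
proof -
  obtain C where C: "compact C" "C \<subseteq> U" "\<And>x. x \<notin> C \<Longrightarrow> \<phi> x = 0"
    using assms(1) unfolding cc1_fun_def by blast
  show ?thesis
    by (rule cc1_fun_supported_in[OF cc1_fun_mult[OF assms(1-3)] compact_diff[OF C(1) assms(4)]])
      (use C assms(5) in auto)
qed

lemma cc1_fun_translate:
  assumes "cc1_fun U \<phi> G"
  shows "cc1_fun UNIV (\<lambda>x. \<phi> (x + h)) (\<lambda>x. G (x + h))"
proof -
  obtain C where C: "compact C" "\<And>x. x \<notin> C \<Longrightarrow> \<phi> x = 0"
    using assms unfolding cc1_fun_def by blast
  have "((\<lambda>x. \<phi> (x + h)) has_derivative (\<lambda>y. G (x + h) \<bullet> y)) (at x)" for x
  proof -
    have "((\<lambda>x. x + h) has_derivative (\<lambda>y. y)) (at x)" by (auto intro!: derivative_eq_intros)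
    from has_derivative_compose[OF this cc1_fun_has_derivative[OF assms]] show ?thesis by (simp add: o_def)
  qed
  moreover have "continuous_on UNIV (\<lambda>x. G (x + h))"
    by (intro continuous_on_compose2[OF cc1_fun_gradient_continuous[OF assms]] continuous_intros) auto
  moreover have "compact ((\<lambda>x. x - h) ` C)" "\<And>x. x \<notin> (\<lambda>x. x - h) ` C \<Longrightarrow> \<phi> (x + h) = 0"
    using C by (auto intro: compact_translation_subtract simp: image_iff, metis add_diff_cancel)
  ultimately show ?thesis
    unfolding cc1_fun_def by blast
qed

section \<open>Squared \<open>L\<^sup>2\<close> norms\<close>

definition L2_sqnorm :: "('a::euclidean_space \<Rightarrow> 'b::real_normed_vector) \<Rightarrow> ennreal" where
  "L2_sqnorm f = (\<integral>\<^sup>+ x. ennreal ((norm (f x))\<^sup>2) \<partial>lborel)"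

lemma L2_sqnorm_real: "L2_sqnorm (f :: 'a::euclidean_space \<Rightarrow> real) = (\<integral>\<^sup>+ x. ennreal ((f x)\<^sup>2) \<partial>lborel)"
  unfolding L2_sqnorm_def by simp

lemma L2_sqnorm_mono:
  assumes "\<And>x. norm (f x) \<le> norm (g x)"
  shows "L2_sqnorm f \<le> L2_sqnorm g"
  unfolding L2_sqnorm_def using assms by (intro nn_integral_mono ennreal_leI power_mono) auto

lemma L2_sqnorm_le_scaled:
  assumes "\<And>x. norm (f x) \<le> c * norm (g x)" "c \<ge> 0" "g \<in> borel_measurable borel"
  shows "L2_sqnorm f \<le> ennreal (c\<^sup>2) * L2_sqnorm g"
proof -
  have "L2_sqnorm f \<le> (\<integral>\<^sup>+ x. ennreal (c\<^sup>2) * ennreal ((norm (g x))\<^sup>2) \<partial>lborel)"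
    unfolding L2_sqnorm_def using assms(1,2)
    by (intro nn_integral_mono)
      (auto simp: ennreal_mult'[symmetric] power_mult_distrib[symmetric] intro!: ennreal_leI power_mono)
  also have "\<dots> = ennreal (c\<^sup>2) * L2_sqnorm g"
    unfolding L2_sqnorm_def using assms(3) by (intro nn_integral_cmult) auto
  finally show ?thesis .
qed

lemma L2_sqnorm_triangle:
  assumes "f \<in> borel_measurable borel" "g \<in> borel_measurable borel"
    and "\<And>x. norm (h x) \<le> norm (f x) + norm (g x)"
  shows "L2_sqnorm h \<le> 2 * L2_sqnorm f + 2 * L2_sqnorm g"
proof -
  have "ennreal ((norm (h x))\<^sup>2) \<le> 2 * ennreal ((norm (f x))\<^sup>2) + 2 * ennreal ((norm (g x))\<^sup>2)" for x
  proof -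
    have "(norm (h x))\<^sup>2 \<le> (norm (f x) + norm (g x))\<^sup>2"
      using assms(3)[of x] by (intro power_mono) auto
    also have "\<dots> \<le> 2 * (norm (f x))\<^sup>2 + 2 * (norm (g x))\<^sup>2"
      using sum_squares_bound[of "norm (f x)" "norm (g x)"] by (simp add: power2_sum)
    finally have "ennreal ((norm (h x))\<^sup>2) \<le> ennreal (2 * (norm (f x))\<^sup>2 + 2 * (norm (g x))\<^sup>2)"
      by (rule ennreal_leI)
    then show ?thesis by (simp add: ennreal_mult)
  qed
  then have "L2_sqnorm h \<le> (\<integral>\<^sup>+ x. 2 * ennreal ((norm (f x))\<^sup>2) + 2 * ennreal ((norm (g x))\<^sup>2) \<partial>lborel)"
    unfolding L2_sqnorm_def by (rule nn_integral_mono)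
  also have "\<dots> = 2 * L2_sqnorm f + 2 * L2_sqnorm g"
    unfolding L2_sqnorm_def using assms(1,2) by (simp add: nn_integral_add nn_integral_cmult)
  finally show ?thesis .
qed

lemma L2_sqnorm_triangle3:
  assumes "f \<in> borel_measurable borel" "g \<in> borel_measurable borel" "k \<in> borel_measurable borel"
    and "\<And>x. norm (h x) \<le> norm (f x) + norm (g x) + norm (k x)"
  shows "L2_sqnorm h \<le> 3 * L2_sqnorm f + 3 * L2_sqnorm g + 3 * L2_sqnorm k"
proof -
  have "ennreal ((norm (h x))\<^sup>2) \<le>
      3 * ennreal ((norm (f x))\<^sup>2) + 3 * ennreal ((norm (g x))\<^sup>2) + 3 * ennreal ((norm (k x))\<^sup>2)" for x
  proof -
    have sq3: "(a + b + c)\<^sup>2 \<le> 3 * a\<^sup>2 + 3 * b\<^sup>2 + 3 * c\<^sup>2" for a b c :: real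
    proof -
      have "0 \<le> (a - b)\<^sup>2 + (b - c)\<^sup>2 + (a - c)\<^sup>2" by simp
      then show ?thesis by (simp add: power2_eq_square algebra_simps)
    qed
    have "(norm (h x))\<^sup>2 \<le> (norm (f x) + norm (g x) + norm (k x))\<^sup>2"
      using assms(4)[of x] by (intro power_mono) auto
    also have "\<dots> \<le> 3 * (norm (f x))\<^sup>2 + 3 * (norm (g x))\<^sup>2 + 3 * (norm (k x))\<^sup>2"
      by (rule sq3)
    finally have "ennreal ((norm (h x))\<^sup>2) \<le>
        ennreal (3 * (norm (f x))\<^sup>2 + 3 * (norm (g x))\<^sup>2 + 3 * (norm (k x))\<^sup>2)"
      by (rule ennreal_leI)
    then show ?thesis by (simp add: ennreal_mult)
  qed
  then have "L2_sqnorm h \<le> (\<integral>\<^sup>+ x. 3 * ennreal ((norm (f x))\<^sup>2) + 3 * ennreal ((norm (g x))\<^sup>2)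
      + 3 * ennreal ((norm (k x))\<^sup>2) \<partial>lborel)"
    unfolding L2_sqnorm_def by (rule nn_integral_mono)
  also have "\<dots> = 3 * L2_sqnorm f + 3 * L2_sqnorm g + 3 * L2_sqnorm k"
    unfolding L2_sqnorm_def using assms(1-3) by (simp add: nn_integral_add nn_integral_cmult)
  finally show ?thesis .
qed

lemma nn_integral_lborel_translate:
  fixes f :: "'a::euclidean_space \<Rightarrow> ennreal"
  assumes "f \<in> borel_measurable borel"
  shows "(\<integral>\<^sup>+ x. f (x + h) \<partial>lborel) = (\<integral>\<^sup>+ x. f x \<partial>lborel)"
proof -
  have "(\<integral>\<^sup>+ x. f x \<partial>lborel) = (\<integral>\<^sup>+ x. f x \<partial>distr lborel borel ((+) h))"
    unfolding lborel_distr_plus ..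
  also have "\<dots> = (\<integral>\<^sup>+ x. f (h + x) \<partial>lborel)"
    using assms by (subst nn_integral_distr) auto
  finally show ?thesis by (simp add: add.commute)
qed

lemma L2_sqnorm_translate:
  assumes "f \<in> borel_measurable borel"
  shows "L2_sqnorm (\<lambda>x. f (x + h)) = L2_sqnorm f"
  unfolding L2_sqnorm_def using assms by (intro nn_integral_lborel_translate) auto

lemma L2_sqnorm_indicator:
  assumes "A \<in> sets lborel"
  shows "L2_sqnorm (indicator A :: 'a::euclidean_space \<Rightarrow> real) = emeasure lborel A"
proof -
  have "L2_sqnorm (indicator A :: 'a \<Rightarrow> real) = (\<integral>\<^sup>+ y. indicator A y \<partial>lborel)"
    unfolding L2_sqnorm_def by (intro nn_integral_cong) (auto simp: indicator_def)
  then show ?thesis using assms by simp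
qed

lemma L2_sqnorm_le_indicator:
  assumes "compact D" "\<And>x. norm (f x) \<le> c * indicator D x"
  shows "L2_sqnorm f \<le> ennreal (c\<^sup>2) * emeasure lborel D"
proof -
  have "L2_sqnorm f \<le> (\<integral>\<^sup>+ x. ennreal (c\<^sup>2) * indicator D x \<partial>lborel)"
    unfolding L2_sqnorm_def
  proof (intro nn_integral_mono)
    fix x
    have "(norm (f x))\<^sup>2 \<le> (c * indicator D x)\<^sup>2" using assms(2)[of x] by (intro power_mono) auto
    then show "ennreal ((norm (f x))\<^sup>2) \<le> ennreal (c\<^sup>2) * indicator D x"
      by (auto simp: indicator_def)
  qed
  also have "\<dots> = ennreal (c\<^sup>2) * emeasure lborel D"
    using assms(1) by (simp add: compact_imp_closed borel_closed nn_integral_cmult_indicator)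
  finally show ?thesis .
qed

lemma emeasure_lborel_compact_finite: "compact D \<Longrightarrow> emeasure lborel D < \<infinity>"
  by (metis compact_imp_bounded bounded_subset_cbox_symmetric emeasure_lborel_cbox_finite
      emeasure_mono le_less_trans sets_lborel cbox_borel)

lemma ennreal_le_of_le_add_tendsto_0:
  fixes X :: "nat \<Rightarrow> ennreal"
  assumes "X \<longlonglongrightarrow> 0" "\<And>n. a \<le> c + X n"
  shows "a \<le> c"
  using assms by (intro LIMSEQ_le_const[of "\<lambda>n. c + X n"]) (auto intro: tendsto_add[THEN tendsto_eq_rhs])

lemma ennreal_tendsto_cmult_0:
  fixes X :: "nat \<Rightarrow> ennreal"
  shows "X \<longlonglongrightarrow> 0 \<Longrightarrow> c < \<infinity> \<Longrightarrow> (\<lambda>n. c * X n) \<longlonglongrightarrow> 0"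
  using ennreal_tendsto_cmult[of c X 0] by simp

lemma ennreal_tendsto_0_le:
  fixes X Y :: "nat \<Rightarrow> ennreal"
  shows "Y \<longlonglongrightarrow> 0 \<Longrightarrow> (\<And>n. X n \<le> Y n) \<Longrightarrow> X \<longlonglongrightarrow> 0"
  by (rule tendsto_sandwich[of "\<lambda>_. 0" _ _ Y]) auto

lemma ennreal_small_square_mult:
  fixes M y :: ennreal
  assumes "M < \<infinity>" "y > 0"
  obtains \<epsilon> :: real where "\<epsilon> > 0" "ennreal (\<epsilon>\<^sup>2) * M < y"
proof -
  have "((\<lambda>\<epsilon>::real. M * ennreal (\<epsilon>\<^sup>2)) \<longlongrightarrow> M * ennreal (0\<^sup>2)) (at_right 0)"
    by (intro ennreal_tendsto_cmult tendsto_ennrealI tendsto_intros) (use assms(1) in auto)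
  then have "\<forall>\<^sub>F \<epsilon> in at_right 0. 0 < \<epsilon> \<and> M * ennreal (\<epsilon>\<^sup>2) < y"
    using assms(2) by (intro eventually_conj eventually_at_right_less order_tendstoD(2)) auto
  then obtain \<epsilon> :: real where "0 < \<epsilon>" "M * ennreal (\<epsilon>\<^sup>2) < y"
    using eventually_happens'[OF trivial_limit_at_right_real] by blast
  with that show ?thesis by (simp add: mult.commute)
qed

lemma ennreal_numeral_mult_add:
  fixes a b :: real
  shows "0 \<le> a \<Longrightarrow> 0 \<le> b \<Longrightarrow>
    numeral m * ennreal a + numeral n * ennreal b = ennreal (numeral m * a + numeral n * b)"
  by (simp add: ennreal_mult)

lemma ennreal_numeral_mult_add3:
  fixes a b c :: real
  shows "0 \<le> a \<Longrightarrow> 0 \<le> b \<Longrightarrow> 0 \<le> c \<Longrightarrow>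
    numeral k * ennreal a + numeral m * ennreal b + numeral n * ennreal c
      = ennreal (numeral k * a + numeral m * b + numeral n * c)"
  by (simp add: ennreal_mult)

lemma obtain_pos_mult_le:
  fixes A \<epsilon> :: real
  assumes "A \<ge> 0" "\<epsilon> > 0"
  obtains x where "x > 0" "A * x \<le> \<epsilon>"
proof (rule that[of "\<epsilon> / (A + 1)"])
  show "\<epsilon> / (A + 1) > 0" using assms by simp
  have "A * (\<epsilon> / (A + 1)) = \<epsilon> * (A / (A + 1))" by simp
  also have "\<dots> \<le> \<epsilon> * 1" by (rule mult_left_mono) (use assms in \<open>auto simp: divide_le_eq_1\<close>)
  finally show "A * (\<epsilon> / (A + 1)) \<le> \<epsilon>" by simp
qed

lemma obtain_pos_square_mult_le:
  fixes A \<epsilon> :: real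
  assumes "A \<ge> 0" "\<epsilon> > 0"
  obtains x where "x > 0" "x\<^sup>2 * A \<le> \<epsilon>"
proof -
  obtain y where "y > 0" "A * y \<le> \<epsilon>" using obtain_pos_mult_le[OF assms] by blast
  then show ?thesis using that[of "sqrt y"] by (simp add: mult.commute)
qed

lemma ennreal_positive_obtain_less:
  fixes a :: ennreal
  assumes "0 < a" "c > 0"
  obtains \<delta> :: real where "\<delta> > 0" "ennreal (c * \<delta>) < a"
proof (cases "a = \<infinity>")
  case True
  then show ?thesis using that[of 1] assms(2) by simp
next
  case False
  then obtain r where r: "a = ennreal r" "r > 0" using assms(1) by (cases a) auto
  have "c * (r / (2 * c)) = r / 2" using assms(2) by simp
  then have "ennreal (c * (r / (2 * c))) < a" using r by (simp add: ennreal_lessI)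
  then show ?thesis using that[of "r / (2 * c)"] r(2) assms(2) by simp
qed

definition square_integrable :: "('a::euclidean_space \<Rightarrow> 'b::euclidean_space) \<Rightarrow> bool" where
  "square_integrable f \<longleftrightarrow> f \<in> borel_measurable borel \<and> L2_sqnorm f < \<infinity>"

lemma square_integrable_add:
  assumes "square_integrable f" "square_integrable g"
  shows "square_integrable (\<lambda>x. f x + g x)"
proof -
  have "L2_sqnorm (\<lambda>x. f x + g x) \<le> 2 * L2_sqnorm f + 2 * L2_sqnorm g"
    using assms unfolding square_integrable_def by (intro L2_sqnorm_triangle) (auto intro: norm_triangle_ineq)
  also have "\<dots> < \<infinity>" using assms unfolding square_integrable_def by (simp add: ennreal_mult_less_top)
  finally show ?thesis using assms unfolding square_integrable_def by auto
qed

lemma square_integrable_diff: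
  assumes "square_integrable f" "square_integrable g"
  shows "square_integrable (\<lambda>x. f x - g x)"
proof -
  have "L2_sqnorm (\<lambda>x. f x - g x) \<le> 2 * L2_sqnorm f + 2 * L2_sqnorm g"
    using assms unfolding square_integrable_def by (intro L2_sqnorm_triangle) (auto intro: norm_triangle_ineq4)
  also have "\<dots> < \<infinity>" using assms unfolding square_integrable_def by (simp add: ennreal_mult_less_top)
  finally show ?thesis using assms unfolding square_integrable_def by auto
qed

lemma square_integrable_inner_const:
  assumes "square_integrable w"
  shows "square_integrable (\<lambda>x. w x \<bullet> e)"
proof -
  have "L2_sqnorm (\<lambda>x. w x \<bullet> e) \<le> ennreal ((norm e)\<^sup>2) * L2_sqnorm w"
    using assms unfolding square_integrable_def
    by (intro L2_sqnorm_le_scaled) (auto simp: mult.commute intro: order_trans[OF Cauchy_Schwarz_ineq2])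
  also have "\<dots> < \<infinity>" using assms unfolding square_integrable_def by (simp add: ennreal_mult_less_top)
  finally show ?thesis using assms unfolding square_integrable_def by auto
qed

lemma square_integrable_bounded_support:
  assumes "f \<in> borel_measurable borel" "compact D" "\<And>x. norm (f x) \<le> M * indicator D x"
  shows "square_integrable f"
proof -
  have "L2_sqnorm f \<le> ennreal (M\<^sup>2) * emeasure lborel D"
    by (rule L2_sqnorm_le_indicator[OF assms(2,3)])
  also have "\<dots> < \<infinity>"
    using emeasure_lborel_compact_finite[OF assms(2)] by (simp add: ennreal_mult_less_top)
  finally show ?thesis using assms(1) unfolding square_integrable_def by simp
qed

lemma square_integrable_cc1_fun:
  assumes "cc1_fun U \<phi> G"
  shows "square_integrable \<phi>" "square_integrable G"
proof -
  obtain C where C: "compact C" "C \<subseteq> U" "\<And>x. x \<notin> C \<Longrightarrow> \<phi> x = 0" "\<And>x. x \<notin> C \<Longrightarrow> G x = 0"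
    using cc1_fun_support[OF assms] by blast
  obtain M where M: "M > 0" "\<And>x. \<bar>\<phi> x\<bar> \<le> M" "\<And>x. norm (G x) \<le> M"
    using cc1_fun_bounded[OF assms] by blast
  show "square_integrable \<phi>"
    using M C by (intro square_integrable_bounded_support[OF cc1_fun_measurable[OF assms] C(1), of M])
      (auto simp: indicator_def)
  show "square_integrable G"
    using M C by (intro square_integrable_bounded_support[OF cc1_fun_gradient_measurable[OF assms] C(1), of M])
      (auto simp: indicator_def)
qed

lemma integrable_inner_square_integrable:
  fixes a b :: "'a::euclidean_space \<Rightarrow> 'b::euclidean_space"
  assumes "square_integrable a" "square_integrable b"
  shows "integrable lborel (\<lambda>x. a x \<bullet> b x)"
proof -
  have m: "a \<in> borel_measurable borel" "b \<in> borel_measurable borel"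
    using assms unfolding square_integrable_def by auto
  have "(\<integral>\<^sup>+x. ennreal (norm (a x \<bullet> b x)) \<partial>lborel) \<le>
      (\<integral>\<^sup>+x. ennreal ((norm (a x))\<^sup>2) + ennreal ((norm (b x))\<^sup>2) \<partial>lborel)"
  proof (intro nn_integral_mono)
    fix x
    have "norm (a x \<bullet> b x) \<le> norm (a x) * norm (b x)"
      using Cauchy_Schwarz_ineq2 by simp
    also have "\<dots> \<le> (norm (a x))\<^sup>2 + (norm (b x))\<^sup>2"
      using sum_squares_bound[of "norm (a x)" "norm (b x)"]
        mult_nonneg_nonneg[OF norm_ge_zero norm_ge_zero, of "a x" "b x"] by linarith
    finally show "ennreal (norm (a x \<bullet> b x)) \<le> ennreal ((norm (a x))\<^sup>2) + ennreal ((norm (b x))\<^sup>2)"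
      by (simp add: ennreal_plus[symmetric] del: ennreal_plus)
  qed
  also have "\<dots> = L2_sqnorm a + L2_sqnorm b"
    using m by (simp add: nn_integral_add L2_sqnorm_def)
  also have "\<dots> < \<infinity>" using assms unfolding square_integrable_def by simp
  finally show ?thesis using m unfolding integrable_iff_bounded by auto
qed

lemma integrable_mult_square_integrable:
  fixes a b :: "'a::euclidean_space \<Rightarrow> real"
  shows "square_integrable a \<Longrightarrow> square_integrable b \<Longrightarrow> integrable lborel (\<lambda>x. a x * b x)"
  using integrable_inner_square_integrable[of a b] by (simp add: inner_real_def)

lemma L2_sqnorm_eq_integral:
  assumes "square_integrable w"
  shows "L2_sqnorm w = ennreal (\<integral>x. w x \<bullet> w x \<partial>lborel)"
proof -
  have "L2_sqnorm w = (\<integral>\<^sup>+ x. ennreal (w x \<bullet> w x) \<partial>lborel)"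
    unfolding L2_sqnorm_def by (simp add: power2_norm_eq_inner)
  also have "\<dots> = ennreal (\<integral>x. w x \<bullet> w x \<partial>lborel)"
    by (rule nn_integral_eq_integral[OF integrable_inner_square_integrable[OF assms assms]]) simp
  finally show ?thesis .
qed

lemma integral_mult_square_le:
  fixes a b :: "'a::euclidean_space \<Rightarrow> real"
  assumes "square_integrable a" "square_integrable b"
  shows "(ennreal \<bar>\<integral>x. a x * b x \<partial>lborel\<bar>)\<^sup>2 \<le> L2_sqnorm a * L2_sqnorm b"
proof -
  have m: "a \<in> borel_measurable borel" "b \<in> borel_measurable borel"
    using assms unfolding square_integrable_def by auto
  have "ennreal \<bar>\<integral>x. a x * b x \<partial>lborel\<bar> \<le> (\<integral>\<^sup>+x. ennreal \<bar>a x\<bar> * ennreal \<bar>b x\<bar> \<partial>lborel)"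
    using integral_norm_bound_ennreal[OF integrable_mult_square_integrable[OF assms]]
    by (simp add: abs_mult ennreal_mult)
  then have "(ennreal \<bar>\<integral>x. a x * b x \<partial>lborel\<bar>)\<^sup>2 \<le> (\<integral>\<^sup>+x. ennreal \<bar>a x\<bar> * ennreal \<bar>b x\<bar> \<partial>lborel)\<^sup>2"
    by (simp add: power_mono)
  also have "\<dots> \<le> (\<integral>\<^sup>+x. (ennreal \<bar>a x\<bar>)^2 \<partial>lborel) * (\<integral>\<^sup>+x. (ennreal \<bar>b x\<bar>)^2 \<partial>lborel)"
    by (rule Cauchy_Schwarz_nn_integral) (use m in auto)
  also have "\<dots> = L2_sqnorm a * L2_sqnorm b"
    by (simp add: L2_sqnorm_real ennreal_power power2_abs)
  finally show ?thesis .
qed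

lemma integral_mult_tendsto_L2:
  fixes p q :: "'a::euclidean_space \<Rightarrow> real"
  assumes "square_integrable p" "square_integrable q" "\<And>n. square_integrable (P n)"
    and "(\<lambda>n. L2_sqnorm (\<lambda>x. p x - P n x)) \<longlonglongrightarrow> 0"
  shows "(\<lambda>n. \<integral>x. P n x * q x \<partial>lborel) \<longlonglongrightarrow> (\<integral>x. p x * q x \<partial>lborel)"
proof -
  define r where "r n = \<bar>\<integral>x. (p x - P n x) * q x \<partial>lborel\<bar>" for n
  have "(\<lambda>n. L2_sqnorm (\<lambda>x. p x - P n x) * L2_sqnorm q) \<longlonglongrightarrow> 0"
    using ennreal_tendsto_cmult_0[OF assms(4), of "L2_sqnorm q"] assms(2)
    unfolding square_integrable_def by (simp add: mult.commute)
  moreover have "ennreal ((r n)\<^sup>2) \<le> L2_sqnorm (\<lambda>x. p x - P n x) * L2_sqnorm q" for n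
    using integral_mult_square_le[OF square_integrable_diff[OF assms(1,3)] assms(2)]
    unfolding r_def by (simp add: ennreal_power)
  ultimately have "(\<lambda>n. ennreal ((r n)\<^sup>2)) \<longlonglongrightarrow> 0" by (rule ennreal_tendsto_0_le)
  then have "(\<lambda>n. sqrt ((r n)\<^sup>2)) \<longlonglongrightarrow> sqrt 0"
    by (intro tendsto_real_sqrt) (subst (asm) ennreal_tendsto_0_iff, auto)
  then have "(\<lambda>n. \<integral>x. (p x - P n x) * q x \<partial>lborel) \<longlonglongrightarrow> 0"
    by (simp add: r_def tendsto_rabs_zero_iff)
  then have "(\<lambda>n. (\<integral>x. p x * q x \<partial>lborel) - (\<integral>x. (p x - P n x) * q x \<partial>lborel)) \<longlonglongrightarrow> (\<integral>x. p x * q x \<partial>lborel) - 0"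
    by (intro tendsto_diff tendsto_const)
  moreover have "(\<integral>x. p x * q x \<partial>lborel) - (\<integral>x. (p x - P n x) * q x \<partial>lborel) = (\<integral>x. P n x * q x \<partial>lborel)" for n
    using integrable_mult_square_integrable[OF assms(1,2)] integrable_mult_square_integrable[OF assms(3,2)]
    by (simp add: left_diff_distrib)
  ultimately show ?thesis by simp
qed

section \<open>The space \<open>H\<^sup>1\<^sub>0\<close>\<close>

lemma H10_grad_iff:
  "H10_grad U f g \<longleftrightarrow> f \<in> borel_measurable borel \<and> g \<in> borel_measurable borel \<and>
     (\<exists>\<phi> G. (\<forall>n. cc1_fun U (\<phi> n) (G n)) \<and> (\<lambda>n. L2_sqnorm (\<lambda>x. f x - \<phi> n x)) \<longlonglongrightarrow> 0 \<and>
        (\<lambda>n. L2_sqnorm (\<lambda>x. g x - G n x)) \<longlonglongrightarrow> 0)"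
  unfolding H10_grad_def L2_sqnorm_real by (simp add: L2_sqnorm_def)

lemma H10_grad_approx:
  assumes "H10_grad U f g"
  obtains \<phi> G where "\<And>n. cc1_fun U (\<phi> n) (G n)" "(\<lambda>n. L2_sqnorm (\<lambda>x. f x - \<phi> n x)) \<longlonglongrightarrow> 0"
    "(\<lambda>n. L2_sqnorm (\<lambda>x. g x - G n x)) \<longlonglongrightarrow> 0"
  using assms unfolding H10_grad_iff by blast

lemma H10_grad_measurable: "H10_grad U f g \<Longrightarrow> f \<in> borel_measurable borel"
  and H10_grad_gradient_measurable: "H10_grad U f g \<Longrightarrow> g \<in> borel_measurable borel"
  unfolding H10_grad_iff by auto

lemma H10_grad_cc1_fun: "cc1_fun U \<phi> G \<Longrightarrow> H10_grad U \<phi> G"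
  unfolding H10_grad_iff using cc1_fun_measurable cc1_fun_gradient_measurable
  by (intro conjI exI[of _ "\<lambda>_. \<phi>"] exI[of _ "\<lambda>_. G"]) (auto simp: L2_sqnorm_def)

lemma H10_grad_mono: "H10_grad U f g \<Longrightarrow> U \<subseteq> V \<Longrightarrow> H10_grad V f g"
  unfolding H10_grad_def using cc1_fun_mono by blast

lemma L2_sqnorm_approx_add:
  fixes f g :: "'a::euclidean_space \<Rightarrow> 'b::euclidean_space"
  assumes "f \<in> borel_measurable borel" "g \<in> borel_measurable borel"
    and "\<And>n. \<phi> n \<in> borel_measurable borel" "\<And>n. \<psi> n \<in> borel_measurable borel"
    and "(\<lambda>n. L2_sqnorm (\<lambda>x. f x - \<phi> n x)) \<longlonglongrightarrow> 0" "(\<lambda>n. L2_sqnorm (\<lambda>x. g x - \<psi> n x)) \<longlonglongrightarrow> 0"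
  shows "(\<lambda>n. L2_sqnorm (\<lambda>x. (f x + g x) - (\<phi> n x + \<psi> n x))) \<longlonglongrightarrow> 0"
proof (rule ennreal_tendsto_0_le)
  show "(\<lambda>n. 2 * L2_sqnorm (\<lambda>x. f x - \<phi> n x) + 2 * L2_sqnorm (\<lambda>x. g x - \<psi> n x)) \<longlonglongrightarrow> 0"
    using tendsto_add[OF ennreal_tendsto_cmult_0[OF assms(5)] ennreal_tendsto_cmult_0[OF assms(6)]] by simp
  show "L2_sqnorm (\<lambda>x. (f x + g x) - (\<phi> n x + \<psi> n x)) \<le>
      2 * L2_sqnorm (\<lambda>x. f x - \<phi> n x) + 2 * L2_sqnorm (\<lambda>x. g x - \<psi> n x)" for n
  proof (rule L2_sqnorm_triangle)
    show "(\<lambda>x. f x - \<phi> n x) \<in> borel_measurable borel" "(\<lambda>x. g x - \<psi> n x) \<in> borel_measurable borel"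
      using assms(1-4) by auto
  qed (simp add: add_diff_add norm_triangle_ineq)
qed

lemma L2_sqnorm_approx_scale:
  fixes f :: "'a::euclidean_space \<Rightarrow> 'b::euclidean_space"
  assumes "\<And>n. (\<lambda>x. f x - \<phi> n x) \<in> borel_measurable borel"
    and "(\<lambda>n. L2_sqnorm (\<lambda>x. f x - \<phi> n x)) \<longlonglongrightarrow> 0"
  shows "(\<lambda>n. L2_sqnorm (\<lambda>x. c *\<^sub>R f x - c *\<^sub>R \<phi> n x)) \<longlonglongrightarrow> 0"
proof (rule ennreal_tendsto_0_le)
  show "(\<lambda>n. ennreal (\<bar>c\<bar>\<^sup>2) * L2_sqnorm (\<lambda>x. f x - \<phi> n x)) \<longlonglongrightarrow> 0"
    by (intro ennreal_tendsto_cmult_0 assms) auto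
  show "L2_sqnorm (\<lambda>x. c *\<^sub>R f x - c *\<^sub>R \<phi> n x) \<le> ennreal (\<bar>c\<bar>\<^sup>2) * L2_sqnorm (\<lambda>x. f x - \<phi> n x)" for n
    by (rule L2_sqnorm_le_scaled[OF _ _ assms(1)]) (auto simp: scaleR_diff_right[symmetric])
qed

lemma H10_grad_add:
  assumes "H10_grad U f g" "H10_grad U f' g'"
  shows "H10_grad U (\<lambda>x. f x + f' x) (\<lambda>x. g x + g' x)"
proof -
  obtain \<phi> G where a: "\<And>n. cc1_fun U (\<phi> n) (G n)" "(\<lambda>n. L2_sqnorm (\<lambda>x. f x - \<phi> n x)) \<longlonglongrightarrow> 0"
    "(\<lambda>n. L2_sqnorm (\<lambda>x. g x - G n x)) \<longlonglongrightarrow> 0"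
    using H10_grad_approx[OF assms(1)] by blast
  obtain \<psi> H where b: "\<And>n. cc1_fun U (\<psi> n) (H n)" "(\<lambda>n. L2_sqnorm (\<lambda>x. f' x - \<psi> n x)) \<longlonglongrightarrow> 0"
    "(\<lambda>n. L2_sqnorm (\<lambda>x. g' x - H n x)) \<longlonglongrightarrow> 0"
    using H10_grad_approx[OF assms(2)] by blast
  note m = H10_grad_measurable[OF assms(1)] H10_grad_gradient_measurable[OF assms(1)]
    H10_grad_measurable[OF assms(2)] H10_grad_gradient_measurable[OF assms(2)]
    cc1_fun_measurable[OF a(1)] cc1_fun_gradient_measurable[OF a(1)]
    cc1_fun_measurable[OF b(1)] cc1_fun_gradient_measurable[OF b(1)]
  show ?thesis unfolding H10_grad_iff
    using m cc1_fun_add[OF a(1) b(1)] L2_sqnorm_approx_add[OF _ _ _ _ a(2) b(2)]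
      L2_sqnorm_approx_add[OF _ _ _ _ a(3) b(3)]
    by (intro conjI exI[of _ "\<lambda>n x. \<phi> n x + \<psi> n x"] exI[of _ "\<lambda>n x. G n x + H n x"]) auto
qed

lemma H10_grad_scale:
  assumes "H10_grad U f g"
  shows "H10_grad U (\<lambda>x. c * f x) (\<lambda>x. c *\<^sub>R g x)"
proof -
  obtain \<phi> G where a: "\<And>n. cc1_fun U (\<phi> n) (G n)" "(\<lambda>n. L2_sqnorm (\<lambda>x. f x - \<phi> n x)) \<longlonglongrightarrow> 0"
    "(\<lambda>n. L2_sqnorm (\<lambda>x. g x - G n x)) \<longlonglongrightarrow> 0"
    using H10_grad_approx[OF assms] by blast
  note m = H10_grad_measurable[OF assms] H10_grad_gradient_measurable[OF assms]
    cc1_fun_measurable[OF a(1)] cc1_fun_gradient_measurable[OF a(1)]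
  show ?thesis unfolding H10_grad_iff
    using m cc1_fun_scale[OF a(1)] L2_sqnorm_approx_scale[OF _ a(2), of c]
      L2_sqnorm_approx_scale[OF _ a(3), of c]
    by (intro conjI exI[of _ "\<lambda>n x. c * \<phi> n x"] exI[of _ "\<lambda>n x. c *\<^sub>R G n x"]) auto
qed

lemma H10_grad_diff:
  assumes "H10_grad U f g" "H10_grad U f' g'"
  shows "H10_grad U (\<lambda>x. f x - f' x) (\<lambda>x. g x - g' x)"
  using H10_grad_add[OF assms(1) H10_grad_scale[OF assms(2), of "-1"]] by simp

lemma H10_grad_obtain_close:
  assumes "H10_grad U f g" "\<epsilon> > 0"
  obtains \<phi> G where "cc1_fun U \<phi> G" "L2_sqnorm (\<lambda>x. f x - \<phi> x) < ennreal \<epsilon>"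
    "L2_sqnorm (\<lambda>x. g x - G x) < ennreal \<epsilon>"
proof -
  obtain \<phi> G where a: "\<And>n. cc1_fun U (\<phi> n) (G n)" "(\<lambda>n. L2_sqnorm (\<lambda>x. f x - \<phi> n x)) \<longlonglongrightarrow> 0"
    "(\<lambda>n. L2_sqnorm (\<lambda>x. g x - G n x)) \<longlonglongrightarrow> 0"
    using H10_grad_approx[OF assms(1)] by blast
  have "\<forall>\<^sub>F n in sequentially. L2_sqnorm (\<lambda>x. f x - \<phi> n x) < ennreal \<epsilon> \<and> L2_sqnorm (\<lambda>x. g x - G n x) < ennreal \<epsilon>"
    using a(2,3) assms(2) by (intro eventually_conj order_tendstoD(2)) auto
  then obtain n where "L2_sqnorm (\<lambda>x. f x - \<phi> n x) < ennreal \<epsilon>" "L2_sqnorm (\<lambda>x. g x - G n x) < ennreal \<epsilon>"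
    unfolding eventually_sequentially by blast
  with a(1) that show ?thesis by blast
qed

lemma H10_grad_AE_cong:
  assumes "H10_grad U f g" "g' \<in> borel_measurable borel" "AE x in lborel. g x = g' x"
  shows "H10_grad U f g'"
proof -
  have "L2_sqnorm (\<lambda>x. g' x - G x) = L2_sqnorm (\<lambda>x. g x - G x)" for G
    unfolding L2_sqnorm_def using assms(3) by (intro nn_integral_cong_AE) auto
  then show ?thesis using assms(1,2) unfolding H10_grad_iff by simp
qed

lemma H10_grad_square_integrable:
  assumes "H10_grad U f g"
  shows "square_integrable f" "square_integrable g"
proof -
  obtain \<phi> G where a: "cc1_fun U \<phi> G" "L2_sqnorm (\<lambda>x. f x - \<phi> x) < ennreal 1"
    "L2_sqnorm (\<lambda>x. g x - G x) < ennreal 1"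
    using H10_grad_obtain_close[OF assms zero_less_one] by blast
  have "square_integrable (\<lambda>x. f x - \<phi> x)" "square_integrable (\<lambda>x. g x - G x)"
    using a(2,3) H10_grad_measurable[OF assms] H10_grad_gradient_measurable[OF assms]
      cc1_fun_measurable[OF a(1)] cc1_fun_gradient_measurable[OF a(1)]
    unfolding square_integrable_def by (auto simp: less_top[symmetric] order.strict_trans)
  from square_integrable_add[OF this(1) square_integrable_cc1_fun(1)[OF a(1)]]
    square_integrable_add[OF this(2) square_integrable_cc1_fun(2)[OF a(1)]]
  show "square_integrable f" "square_integrable g" by auto
qed

lemma H10_grad_AE_zero_outside:
  assumes "H10_grad U f g" "open U"
  shows "AE x in lborel. x \<notin> U \<longrightarrow> f x = 0"
proof -
  obtain \<phi> G where a: "\<And>n. cc1_fun U (\<phi> n) (G n)" "(\<lambda>n. L2_sqnorm (\<lambda>x. f x - \<phi> n x)) \<longlonglongrightarrow> 0"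
    "(\<lambda>n. L2_sqnorm (\<lambda>x. g x - G n x)) \<longlonglongrightarrow> 0"
    using H10_grad_approx[OF assms(1)] by blast
  have "(\<integral>\<^sup>+ x. indicator (- U) x * ennreal ((f x)\<^sup>2) \<partial>lborel) \<le> 0"
  proof (rule ennreal_le_of_le_add_tendsto_0[OF a(2)])
    fix n
    obtain C where C: "compact C" "C \<subseteq> U" "\<And>x. x \<notin> C \<Longrightarrow> \<phi> n x = 0" "\<And>x. x \<notin> C \<Longrightarrow> G n x = 0"
      using cc1_fun_support[OF a(1)] by blast
    have "\<phi> n x = 0" if "x \<notin> U" for x
      using C(2,3) that by blast
    then have "indicator (- U) x * ennreal ((f x)\<^sup>2) \<le> ennreal ((f x - \<phi> n x)\<^sup>2)" for x
      by (cases "x \<in> U") (auto simp: indicator_def)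
    then show "(\<integral>\<^sup>+ x. indicator (- U) x * ennreal ((f x)\<^sup>2) \<partial>lborel) \<le> 0 + L2_sqnorm (\<lambda>x. f x - \<phi> n x)"
      unfolding L2_sqnorm_real by (simp add: nn_integral_mono)
  qed
  then have "AE x in lborel. indicator (- U) x * ennreal ((f x)\<^sup>2) = 0"
    using H10_grad_measurable[OF assms(1)] assms(2)
    by (subst nn_integral_0_iff_AE[symmetric]) (auto simp: borel_open)
  then show ?thesis by eventually_elim (auto simp: indicator_def)
qed

section \<open>Uniqueness of weak gradients\<close>

lemma uniformly_continuous_compact_support:
  fixes G :: "'a::euclidean_space \<Rightarrow> 'b::real_normed_vector"
  assumes "continuous_on UNIV G" "compact C" "\<And>x. x \<notin> C \<Longrightarrow> G x = 0" "e > 0"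
  obtains d where "d > 0" "\<And>x y. dist x y < d \<Longrightarrow> norm (G x - G y) < e"
proof -
  obtain R where R: "\<And>x. x \<in> C \<Longrightarrow> norm x \<le> R"
    using compact_imp_bounded[OF assms(2)] bounded_iff by metis
  have "uniformly_continuous_on (cball 0 (\<bar>R\<bar> + 1)) G"
    by (intro compact_uniformly_continuous continuous_on_subset[OF assms(1)]) auto
  then obtain d where d: "d > 0"
    "\<And>x y. x \<in> cball 0 (\<bar>R\<bar> + 1) \<Longrightarrow> y \<in> cball 0 (\<bar>R\<bar> + 1) \<Longrightarrow> dist y x < d \<Longrightarrow> dist (G y) (G x) < e"
    unfolding uniformly_continuous_on_def using assms(4) by metis
  show ?thesis
  proof (rule that[of "min d 1"])
    fix x y :: 'a assume xy: "dist x y < min d 1"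
    show "norm (G x - G y) < e"
    proof (cases "x \<in> cball 0 (\<bar>R\<bar> + 1) \<and> y \<in> cball 0 (\<bar>R\<bar> + 1)")
      case True then show ?thesis using d(2)[of y x] xy by (auto simp: dist_norm)
    next
      case False
      moreover have "norm x \<le> norm y + dist x y" "norm y \<le> norm x + dist x y"
        by (metis dist_commute dist_0_norm dist_triangle)+
      ultimately have "norm x > R \<and> norm y > R" using xy by auto
      then have "x \<notin> C" "y \<notin> C" using R by force+
      then show ?thesis using assms(3,4) by auto
    qed
  qed (use d in auto)
qed

lemma cc1_fun_translate_support:
  fixes e :: "'a::euclidean_space"
  assumes "cc1_fun U q G"
  obtains D where "compact D"
    "\<And>t x. 0 \<le> t \<Longrightarrow> t \<le> 1 \<Longrightarrow> x \<notin> D \<Longrightarrow> q (x + t *\<^sub>R e) = 0 \<and> q x = 0 \<and> G x = 0"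
proof -
  obtain C where C: "compact C" "C \<subseteq> U" "\<And>x. x \<notin> C \<Longrightarrow> q x = 0" "\<And>x. x \<notin> C \<Longrightarrow> G x = 0"
    using cc1_fun_support[OF assms] by blast
  obtain R where R: "\<And>x. x \<in> C \<Longrightarrow> norm x \<le> R"
    using compact_imp_bounded[OF C(1)] bounded_iff by metis
  show ?thesis
  proof (rule that[of "cball 0 (\<bar>R\<bar> + norm e)"])
    fix t :: real and x :: 'a assume t: "0 \<le> t" "t \<le> 1" and x: "x \<notin> cball 0 (\<bar>R\<bar> + norm e)"
    have "norm x > \<bar>R\<bar> + norm e" using x by auto
    moreover have "norm x \<le> norm (x + t *\<^sub>R e) + t * norm e"
      using norm_triangle_ineq4[of "x + t *\<^sub>R e" "t *\<^sub>R e"] t by auto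
    moreover have "t * norm e \<le> norm e" using t by (simp add: mult_left_le_one_le)
    ultimately have "norm (x + t *\<^sub>R e) > R" "norm x > R"
      using norm_ge_zero[of e] abs_ge_self[of R] by linarith+
    then show "q (x + t *\<^sub>R e) = 0 \<and> q x = 0 \<and> G x = 0" using C R by force
  qed simp
qed

lemma cc1_fun_difference_quotient_uniform:
  fixes e :: "'a::euclidean_space"
  assumes "cc1_fun U q G" "\<epsilon> > 0"
  obtains \<delta> where "\<delta> > 0" "\<And>t x. 0 < t \<Longrightarrow> t < \<delta> \<Longrightarrow> \<bar>(q (x + t *\<^sub>R e) - q x) / t - G x \<bullet> e\<bar> \<le> \<epsilon>"
proof -
  obtain C where C: "compact C" "C \<subseteq> U" "\<And>x. x \<notin> C \<Longrightarrow> q x = 0" "\<And>x. x \<notin> C \<Longrightarrow> G x = 0"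
    using cc1_fun_support[OF assms(1)] by blast
  have ne: "norm e + 1 > 0" by (simp add: add_nonneg_pos)
  obtain d where d: "d > 0" "\<And>x y. dist x y < d \<Longrightarrow> norm (G x - G y) < \<epsilon> / (norm e + 1)"
    using uniformly_continuous_compact_support[OF cc1_fun_gradient_continuous[OF assms(1)] C(1) C(4)] assms(2) ne
    by (metis divide_pos_pos)
  show ?thesis
  proof (rule that[of "d / (norm e + 1)"])
    show "d / (norm e + 1) > 0" using d(1) ne by simp
    fix t x assume t: "0 < t" "t < d / (norm e + 1)"
    have D: "DERIV (\<lambda>s. q (x + s *\<^sub>R e)) s :> G (x + s *\<^sub>R e) \<bullet> e" for s
    proof -
      have "((\<lambda>s. x + s *\<^sub>R e) has_derivative (\<lambda>h. h *\<^sub>R e)) (at s)"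
        by (auto intro!: derivative_eq_intros)
      from has_derivative_compose[OF this cc1_fun_has_derivative[OF assms(1)]]
      have "((\<lambda>s. q (x + s *\<^sub>R e)) has_derivative (\<lambda>h. G (x + s *\<^sub>R e) \<bullet> (h *\<^sub>R e))) (at s)"
        by (simp add: o_def)
      moreover have "(\<lambda>h. G (x + s *\<^sub>R e) \<bullet> (h *\<^sub>R e)) = (*) (G (x + s *\<^sub>R e) \<bullet> e)"
        by (rule ext) (simp add: mult.commute)
      ultimately show ?thesis by (simp add: has_field_derivative_def)
    qed
    obtain z where z: "0 < z" "z < t"
      "q (x + t *\<^sub>R e) - q (x + 0 *\<^sub>R e) = (t - 0) * (G (x + z *\<^sub>R e) \<bullet> e)"
      using MVT2[of 0 t "\<lambda>s. q (x + s *\<^sub>R e)", OF _ D] t by auto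
    have "norm (z *\<^sub>R e) \<le> t * norm e" using z by (simp add: mult_right_mono)
    also have "\<dots> \<le> d / (norm e + 1) * norm e" using t by (intro mult_right_mono) auto
    also have "\<dots> < d" using d(1) ne by (simp add: field_simps)
    finally have n: "norm (G (x + z *\<^sub>R e) - G x) < \<epsilon> / (norm e + 1)"
      by (intro d(2)) (simp add: dist_norm)
    have q: "(q (x + t *\<^sub>R e) - q x) / t = G (x + z *\<^sub>R e) \<bullet> e"
      using z t by (simp add: field_simps)
    have "\<bar>G (x + z *\<^sub>R e) \<bullet> e - G x \<bullet> e\<bar> \<le> norm (G (x + z *\<^sub>R e) - G x) * norm e"
      by (metis Cauchy_Schwarz_ineq2 inner_diff_left)
    also have "\<dots> \<le> \<epsilon> / (norm e + 1) * norm e" using n by (intro mult_right_mono) auto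
    also have "\<dots> \<le> \<epsilon>" using assms(2) ne by (simp add: field_simps)
    finally show "\<bar>(q (x + t *\<^sub>R e) - q x) / t - G x \<bullet> e\<bar> \<le> \<epsilon>" unfolding q .
  qed
qed

lemma cc1_fun_difference_quotient:
  assumes "cc1_fun U q G"
  shows "cc1_fun UNIV (\<lambda>x. c * (q (x + h) - q x)) (\<lambda>x. c *\<^sub>R (G (x + h) - G x))"
  by (rule cc1_fun_scale[OF cc1_fun_diff[OF cc1_fun_translate[OF assms] cc1_fun_mono[OF assms subset_UNIV]]])

lemma cc1_fun_difference_quotient_tendsto:
  fixes e :: "'a::euclidean_space"
  assumes "cc1_fun U q H"
  shows "(\<lambda>k. L2_sqnorm (\<lambda>x. H x \<bullet> e - real (Suc k) * (q (x + (1 / real (Suc k)) *\<^sub>R e) - q x))) \<longlonglongrightarrow> 0"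
proof (rule order_tendstoI)
  fix y :: ennreal assume y: "y > 0"
  obtain D where D: "compact D"
    "\<And>t x. 0 \<le> t \<Longrightarrow> t \<le> 1 \<Longrightarrow> x \<notin> D \<Longrightarrow> q (x + t *\<^sub>R e) = 0 \<and> q x = 0 \<and> H x = 0"
    using cc1_fun_translate_support[OF assms] by blast
  obtain \<epsilon> where \<epsilon>: "\<epsilon> > 0" "ennreal (\<epsilon>\<^sup>2) * emeasure lborel D < y"
    using ennreal_small_square_mult[OF emeasure_lborel_compact_finite[OF D(1)] y] by blast
  obtain \<delta> where \<delta>: "\<delta> > 0"
    "\<And>t x. 0 < t \<Longrightarrow> t < \<delta> \<Longrightarrow> \<bar>(q (x + t *\<^sub>R e) - q x) / t - H x \<bullet> e\<bar> \<le> \<epsilon>"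
    using cc1_fun_difference_quotient_uniform[OF assms \<epsilon>(1)] by blast
  obtain K where K: "1 / real (Suc K) < \<delta>" using \<delta>(1) by (metis nat_approx_posE)
  show "\<forall>\<^sub>F k in sequentially.
      L2_sqnorm (\<lambda>x. H x \<bullet> e - real (Suc k) * (q (x + (1 / real (Suc k)) *\<^sub>R e) - q x)) < y"
    unfolding eventually_sequentially
  proof (intro exI[of _ K] allI impI)
    fix k assume "K \<le> k"
    define t where "t = 1 / real (Suc k)"
    have t: "0 < t" "t < \<delta>" "t \<le> 1"
      using K \<open>K \<le> k\<close> unfolding t_def by (auto simp: frac_le intro: le_less_trans[rotated])
    have "L2_sqnorm (\<lambda>x. H x \<bullet> e - real (Suc k) * (q (x + t *\<^sub>R e) - q x)) \<le> ennreal (\<epsilon>\<^sup>2) * emeasure lborel D"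
    proof (rule L2_sqnorm_le_indicator[OF D(1)])
      fix x
      have "real (Suc k) * (q (x + t *\<^sub>R e) - q x) = (q (x + t *\<^sub>R e) - q x) / t"
        unfolding t_def by simp
      then show "norm (H x \<bullet> e - real (Suc k) * (q (x + t *\<^sub>R e) - q x)) \<le> \<epsilon> * indicator D x"
        using \<delta>(2)[OF t(1,2), of x] D(2)[OF less_imp_le[OF t(1)] t(3), of x]
        by (cases "x \<in> D") (auto simp: abs_minus_commute)
    qed
    then show "L2_sqnorm (\<lambda>x. H x \<bullet> e - real (Suc k) * (q (x + (1 / real (Suc k)) *\<^sub>R e) - q x)) < y"
      using \<epsilon>(2) unfolding t_def by simp
  qed
qed simp

lemma integral_lborel_translate:
  fixes f :: "'a::euclidean_space \<Rightarrow> 'b::{banach, second_countable_topology}"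
  assumes "f \<in> borel_measurable borel"
  shows "(\<integral>x. f (x + h) \<partial>lborel) = (\<integral>x. f x \<partial>lborel)"
proof -
  have "(\<integral>x. f x \<partial>lborel) = (\<integral>x. f x \<partial>distr lborel borel ((+) h))"
    unfolding lborel_distr_plus ..
  also have "\<dots> = (\<integral>x. f (h + x) \<partial>lborel)" using assms by (subst integral_distr) auto
  finally show ?thesis by (simp add: add.commute)
qed

lemma integrable_continuous_compact_support:
  fixes f :: "'a::euclidean_space \<Rightarrow> 'b::{banach, second_countable_topology}"
  assumes "continuous_on UNIV f" "compact C" "\<And>x. x \<notin> C \<Longrightarrow> f x = 0"
  shows "integrable lborel f"
proof -
  have "integrable lborel (\<lambda>x. indicator C x *\<^sub>R f x)"
    by (rule borel_integrable_compact[OF assms(2) continuous_on_subset[OF assms(1)]]) auto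
  moreover have "(\<lambda>x. indicator C x *\<^sub>R f x) = f" using assms(3) by (auto simp: fun_eq_iff indicator_def)
  ultimately show ?thesis by simp
qed

lemma integrable_cc1_fun: "cc1_fun U \<phi> G \<Longrightarrow> integrable lborel \<phi>"
  by (metis cc1_fun_continuous cc1_fun_support integrable_continuous_compact_support)

lemma integral_cc1_fun_gradient_eq_0:
  assumes "cc1_fun U \<phi> G"
  shows "(\<integral>x. G x \<bullet> e \<partial>lborel) = 0"
proof -
  obtain D where D: "compact D"
    "\<And>t x. 0 \<le> t \<Longrightarrow> t \<le> 1 \<Longrightarrow> x \<notin> D \<Longrightarrow> \<phi> (x + t *\<^sub>R e) = 0 \<and> \<phi> x = 0 \<and> G x = 0"
    using cc1_fun_translate_support[OF assms] by blast
  define \<psi> where "\<psi> k x = real (Suc k) * (\<phi> (x + (1 / real (Suc k)) *\<^sub>R e) - \<phi> x)" for k x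
  have "D \<in> sets borel" by (rule borel_compact[OF D(1)])
  then have sq_D: "square_integrable (indicator D :: 'a \<Rightarrow> real)"
    using L2_sqnorm_indicator[of D] emeasure_lborel_compact_finite[OF D(1)]
    unfolding square_integrable_def by (simp add: borel_measurable_indicator)
  have sq_\<psi>: "square_integrable (\<psi> k)" for k
    unfolding \<psi>_def by (rule square_integrable_cc1_fun(1)[OF cc1_fun_difference_quotient[OF assms]])
  have lim: "(\<lambda>k. \<integral>x. \<psi> k x * indicator D x \<partial>lborel) \<longlonglongrightarrow> (\<integral>x. (G x \<bullet> e) * indicator D x \<partial>lborel)"
    by (rule integral_mult_tendsto_L2[OF square_integrable_inner_const[OF square_integrable_cc1_fun(2)[OF assms]]
          sq_D sq_\<psi>])
      (use cc1_fun_difference_quotient_tendsto[OF assms, of e] in \<open>simp add: \<psi>_def\<close>)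
  have zero: "(\<integral>x. \<psi> k x * indicator D x \<partial>lborel) = 0" for k
  proof -
    have supp: "\<psi> k x * indicator D x = \<psi> k x" for x
      using D(2)[of "1 / real (Suc k)" x] by (auto simp: \<psi>_def indicator_def)
    have "(\<integral>x. \<psi> k x * indicator D x \<partial>lborel) = (\<integral>x. \<psi> k x \<partial>lborel)" by (simp only: supp)
    also have "\<dots> = real (Suc k) * ((\<integral>x. \<phi> (x + (1 / real (Suc k)) *\<^sub>R e) \<partial>lborel) - (\<integral>x. \<phi> x \<partial>lborel))"
      unfolding \<psi>_def using integrable_cc1_fun[OF assms] integrable_cc1_fun[OF cc1_fun_translate[OF assms]]
      by simp
    also have "\<dots> = 0" using integral_lborel_translate[OF cc1_fun_measurable[OF assms]] by simp
    finally show ?thesis .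
  qed
  have supp_G: "(\<lambda>x. (G x \<bullet> e) * indicator D x) = (\<lambda>x. G x \<bullet> e)"
    using D(2)[of 0] by (auto simp: indicator_def fun_eq_iff)
  from lim show ?thesis unfolding zero supp_G by (simp add: LIMSEQ_const_iff)
qed

lemma L2_sqnorm_inner_const_tendsto:
  fixes w :: "'a::euclidean_space \<Rightarrow> 'b::euclidean_space"
  assumes "w \<in> borel_measurable borel" "\<And>n. H n \<in> borel_measurable borel"
    and "(\<lambda>n. L2_sqnorm (\<lambda>x. w x - H n x)) \<longlonglongrightarrow> 0"
  shows "(\<lambda>n. L2_sqnorm (\<lambda>x. w x \<bullet> e - H n x \<bullet> e)) \<longlonglongrightarrow> 0"
proof (rule ennreal_tendsto_0_le)
  show "(\<lambda>n. ennreal ((norm e)\<^sup>2) * L2_sqnorm (\<lambda>x. w x - H n x)) \<longlonglongrightarrow> 0"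
    by (intro ennreal_tendsto_cmult_0 assms(3)) auto
  show "L2_sqnorm (\<lambda>x. w x \<bullet> e - H n x \<bullet> e) \<le> ennreal ((norm e)\<^sup>2) * L2_sqnorm (\<lambda>x. w x - H n x)" for n
    using assms(1,2)
    by (intro L2_sqnorm_le_scaled)
      (auto simp: mult.commute inner_diff_left[symmetric] intro: order_trans[OF Cauchy_Schwarz_ineq2])
qed

lemma H10_grad_zero_integral_test:
  assumes "H10_grad U (\<lambda>_. 0) w" "cc1_fun V \<psi> G\<psi>"
  shows "(\<integral>x. (w x \<bullet> e) * \<psi> x \<partial>lborel) = 0"
proof -
  obtain q H where a: "\<And>n. cc1_fun U (q n) (H n)" "(\<lambda>n. L2_sqnorm (\<lambda>x. 0 - q n x)) \<longlonglongrightarrow> 0"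
    "(\<lambda>n. L2_sqnorm (\<lambda>x. w x - H n x)) \<longlonglongrightarrow> 0"
    using H10_grad_approx[OF assms(1)] by blast
  have Lw: "square_integrable (\<lambda>x. w x \<bullet> e)"
    using square_integrable_inner_const H10_grad_square_integrable(2)[OF assms(1)] by blast
  have Lq: "square_integrable (q n)" "square_integrable (\<lambda>x. H n x \<bullet> e)" for n
    using square_integrable_cc1_fun[OF a(1)] square_integrable_inner_const by blast+
  have L\<psi>: "square_integrable \<psi>" "square_integrable (\<lambda>x. G\<psi> x \<bullet> e)"
    using square_integrable_cc1_fun[OF assms(2)] square_integrable_inner_const by blast+
  have parts: "(\<integral>x. (H n x \<bullet> e) * \<psi> x \<partial>lborel) = - (\<integral>x. q n x * (G\<psi> x \<bullet> e) \<partial>lborel)" for n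
  proof -
    have "(\<integral>x. (\<psi> x *\<^sub>R H n x + q n x *\<^sub>R G\<psi> x) \<bullet> e \<partial>lborel) = 0"
      by (rule integral_cc1_fun_gradient_eq_0[OF cc1_fun_mult[OF a(1)
            cc1_fun_has_derivative[OF assms(2)] cc1_fun_gradient_continuous[OF assms(2)]]])
    moreover have "(\<lambda>x. (\<psi> x *\<^sub>R H n x + q n x *\<^sub>R G\<psi> x) \<bullet> e) =
        (\<lambda>x. (H n x \<bullet> e) * \<psi> x + q n x * (G\<psi> x \<bullet> e))"
      by (auto simp: inner_add_left)
    moreover have "integrable lborel (\<lambda>x. (H n x \<bullet> e) * \<psi> x)" "integrable lborel (\<lambda>x. q n x * (G\<psi> x \<bullet> e))"
      using integrable_mult_square_integrable Lq L\<psi> by blast+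
    ultimately show ?thesis by simp
  qed
  have l1: "(\<lambda>n. \<integral>x. (H n x \<bullet> e) * \<psi> x \<partial>lborel) \<longlonglongrightarrow> (\<integral>x. (w x \<bullet> e) * \<psi> x \<partial>lborel)"
    using L2_sqnorm_inner_const_tendsto[OF H10_grad_gradient_measurable[OF assms(1)]
        cc1_fun_gradient_measurable[OF a(1)] a(3)]
    by (rule integral_mult_tendsto_L2[OF Lw L\<psi>(1) Lq(2)])
  have "(\<lambda>n. \<integral>x. q n x * (G\<psi> x \<bullet> e) \<partial>lborel) \<longlonglongrightarrow> (\<integral>x. 0 * (G\<psi> x \<bullet> e) \<partial>lborel)"
    by (rule integral_mult_tendsto_L2[OF _ L\<psi>(2) Lq(1) a(2)]) (simp add: square_integrable_def L2_sqnorm_def)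
  then have "(\<lambda>n. \<integral>x. (H n x \<bullet> e) * \<psi> x \<partial>lborel) \<longlonglongrightarrow> - 0"
    unfolding parts by (intro tendsto_minus) simp
  from LIMSEQ_unique[OF l1 this] show ?thesis by simp
qed

lemma H10_grad_zero_integral_gradient:
  assumes "H10_grad U (\<lambda>_. 0) w" "cc1_fun V q H"
  shows "(\<integral>x. (H x \<bullet> e) * (w x \<bullet> e) \<partial>lborel) = 0"
proof -
  define \<psi> where "\<psi> k x = real (Suc k) * (q (x + (1 / real (Suc k)) *\<^sub>R e) - q x)" for k x
  define G\<psi> where "G\<psi> k x = real (Suc k) *\<^sub>R (H (x + (1 / real (Suc k)) *\<^sub>R e) - H x)" for k x
  have c\<psi>: "cc1_fun UNIV (\<psi> k) (G\<psi> k)" for k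
    unfolding \<psi>_def G\<psi>_def by (rule cc1_fun_difference_quotient[OF assms(2)])
  have "(\<lambda>k. \<integral>x. \<psi> k x * (w x \<bullet> e) \<partial>lborel) \<longlonglongrightarrow> (\<integral>x. (H x \<bullet> e) * (w x \<bullet> e) \<partial>lborel)"
    by (rule integral_mult_tendsto_L2[OF
          square_integrable_inner_const[OF square_integrable_cc1_fun(2)[OF assms(2)]]
          square_integrable_inner_const[OF H10_grad_square_integrable(2)[OF assms(1)]]
          square_integrable_cc1_fun(1)[OF c\<psi>]])
      (use cc1_fun_difference_quotient_tendsto[OF assms(2), of e] in \<open>simp add: \<psi>_def\<close>)
  moreover have "(\<integral>x. \<psi> k x * (w x \<bullet> e) \<partial>lborel) = 0" for k
    using H10_grad_zero_integral_test[OF assms(1) c\<psi>[of k], of e] by (simp add: mult.commute)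
  ultimately show ?thesis by (simp add: LIMSEQ_const_iff)
qed

text \<open>\<open>w\<close> is the \<open>L\<^sup>2\<close>-limit of gradients of test functions, to each of which it is orthogonal.\<close>
lemma H10_grad_zero_imp_AE_zero:
  assumes "H10_grad U (\<lambda>_. 0) w"
  shows "AE x in lborel. w x = 0"
proof -
  obtain q H where a: "\<And>n. cc1_fun U (q n) (H n)" "(\<lambda>n. L2_sqnorm (\<lambda>x. 0 - q n x)) \<longlonglongrightarrow> 0"
    "(\<lambda>n. L2_sqnorm (\<lambda>x. w x - H n x)) \<longlonglongrightarrow> 0"
    using H10_grad_approx[OF assms] by blast
  have Lw: "square_integrable (\<lambda>x. w x \<bullet> e)" for e
    using square_integrable_inner_const H10_grad_square_integrable(2)[OF assms] by blast
  have "(\<lambda>n. \<integral>x. (H n x \<bullet> e) * (w x \<bullet> e) \<partial>lborel) \<longlonglongrightarrow> (\<integral>x. (w x \<bullet> e) * (w x \<bullet> e) \<partial>lborel)" for e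
    using L2_sqnorm_inner_const_tendsto[OF H10_grad_gradient_measurable[OF assms]
        cc1_fun_gradient_measurable[OF a(1)] a(3)]
    by (rule integral_mult_tendsto_L2[OF Lw Lw square_integrable_inner_const[OF square_integrable_cc1_fun(2)[OF a(1)]]])
  then have "(\<integral>x. (w x \<bullet> e) * (w x \<bullet> e) \<partial>lborel) = 0" for e
    unfolding H10_grad_zero_integral_gradient[OF assms a(1)] by (simp add: LIMSEQ_const_iff)
  then have "AE x in lborel. (w x \<bullet> e) * (w x \<bullet> e) = 0" for e
    using integrable_mult_square_integrable[OF Lw Lw]
    by (subst integral_nonneg_eq_0_iff_AE[symmetric]) auto
  then have "AE x in lborel. \<forall>b\<in>Basis. w x \<bullet> b = 0"
    by (intro AE_finite_allI) auto
  then show ?thesis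
    by eventually_elim (simp add: euclidean_all_zero_iff)
qed

lemma H10_grad_unique:
  assumes "H10_grad U f g1" "H10_grad U f g2"
  shows "AE x in lborel. g1 x = g2 x"
proof -
  have "H10_grad U (\<lambda>x. f x - f x) (\<lambda>x. g1 x - g2 x)" by (rule H10_grad_diff[OF assms])
  then have "AE x in lborel. g1 x - g2 x = 0"
    using H10_grad_zero_imp_AE_zero[of U "\<lambda>x. g1 x - g2 x"] by simp
  then show ?thesis by auto
qed

lemma dir_energy_eq_L2_sqnorm:
  assumes "H10_grad U f g"
  shows "dir_energy U f = L2_sqnorm g"
proof -
  have "H10_grad U f (SOME g. H10_grad U f g)" by (rule someI[of "H10_grad U f" g, OF assms])
  from H10_grad_unique[OF this assms] show ?thesis
    unfolding dir_energy_def L2_sqnorm_def by (intro nn_integral_cong_AE) auto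
qed

section \<open>Translation estimate and Poincare inequality\<close>

lemma cc1_fun_increment_integral:
  assumes "cc1_fun U \<phi> G"
  shows "\<phi> (x + h) - \<phi> x = (\<integral>s. indicator {0..1::real} s * (G (x + s *\<^sub>R h) \<bullet> h) \<partial>lborel)"
    and "integrable lborel (\<lambda>s. indicator {0..1::real} s * (G (x + s *\<^sub>R h) \<bullet> h))"
proof -
  define a where "a s = G (x + s *\<^sub>R h) \<bullet> h" for s
  have ac: "continuous_on UNIV a" unfolding a_def
    by (intro continuous_intros continuous_on_compose2[OF cc1_fun_gradient_continuous[OF assms]]) auto
  have D: "((\<lambda>s. \<phi> (x + s *\<^sub>R h)) has_vector_derivative a s) (at s within {0..1})" for s
  proof -
    have "((\<lambda>s. x + s *\<^sub>R h) has_derivative (\<lambda>t. t *\<^sub>R h)) (at s)"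
      by (auto intro!: derivative_eq_intros)
    from has_derivative_compose[OF this cc1_fun_has_derivative[OF assms]]
    have "((\<lambda>s. \<phi> (x + s *\<^sub>R h)) has_derivative (\<lambda>t. G (x + s *\<^sub>R h) \<bullet> (t *\<^sub>R h))) (at s)"
      by (simp add: o_def)
    moreover have "(\<lambda>t. G (x + s *\<^sub>R h) \<bullet> (t *\<^sub>R h)) = (\<lambda>t. t *\<^sub>R a s)"
      by (rule ext) (simp add: a_def)
    ultimately show ?thesis
      by (simp add: has_vector_derivative_def has_derivative_at_withinI)
  qed
  have "(LBINT s=ereal 0..ereal 1. a s) = \<phi> (x + 1 *\<^sub>R h) - \<phi> (x + 0 *\<^sub>R h)"
    by (rule interval_integral_FTC_finite) (use continuous_on_subset[OF ac] D in auto)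
  moreover have "(LBINT s=ereal 0..ereal 1. a s) = (LBINT s:{0..1}. a s)"
    by (rule interval_integral_Icc) simp
  ultimately show "\<phi> (x + h) - \<phi> x = (\<integral>s. indicator {0..1::real} s * (G (x + s *\<^sub>R h) \<bullet> h) \<partial>lborel)"
    by (simp add: set_lebesgue_integral_def a_def)
  show "integrable lborel (\<lambda>s. indicator {0..1::real} s * (G (x + s *\<^sub>R h) \<bullet> h))"
    using borel_integrable_compact[OF compact_Icc[of 0 1] continuous_on_subset[OF ac]]
    by (simp add: a_def)
qed

lemma cc1_fun_increment_square_le:
  assumes "cc1_fun U \<phi> G"
  shows "ennreal ((\<phi> (x + h) - \<phi> x)\<^sup>2) \<le>
     ennreal ((norm h)\<^sup>2) * (\<integral>\<^sup>+ s. indicator {0..1::real} s * ennreal ((norm (G (x + s *\<^sub>R h)))\<^sup>2) \<partial>lborel)"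
proof -
  define I :: "real \<Rightarrow> ennreal" where "I = indicator {0..1}"
  define a where "a s = G (x + s *\<^sub>R h) \<bullet> h" for s
  have Gm: "(\<lambda>s. G (x + s *\<^sub>R h)) \<in> borel_measurable borel"
    by (intro borel_measurable_continuous_onI continuous_on_compose2[OF cc1_fun_gradient_continuous[OF assms]])
      (auto intro!: continuous_intros)
  then have am: "a \<in> borel_measurable borel" unfolding a_def by measurable
  have "ennreal \<bar>\<phi> (x + h) - \<phi> x\<bar> \<le> (\<integral>\<^sup>+s. norm (indicator {0..1::real} s * a s) \<partial>lborel)"
    unfolding a_def cc1_fun_increment_integral(1)[OF assms]
    using integral_norm_bound_ennreal[OF cc1_fun_increment_integral(2)[OF assms]] by simp
  also have "\<dots> = (\<integral>\<^sup>+s. I s * (I s * ennreal \<bar>a s\<bar>) \<partial>lborel)"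
    by (intro nn_integral_cong) (auto simp: I_def indicator_def abs_mult)
  finally have "(ennreal \<bar>\<phi> (x + h) - \<phi> x\<bar>)\<^sup>2 \<le> (\<integral>\<^sup>+s. I s * (I s * ennreal \<bar>a s\<bar>) \<partial>lborel)\<^sup>2"
    by (simp add: power_mono)
  also have "\<dots> \<le> (\<integral>\<^sup>+s. (I s)\<^sup>2 \<partial>lborel) * (\<integral>\<^sup>+s. (I s * ennreal \<bar>a s\<bar>)\<^sup>2 \<partial>lborel)"
    by (rule Cauchy_Schwarz_nn_integral) (use am in \<open>auto simp: I_def\<close>)
  also have "(\<integral>\<^sup>+s. (I s)\<^sup>2 \<partial>lborel) = 1"
  proof -
    have "(\<lambda>s. (I s)\<^sup>2) = indicator {0..1}" by (auto simp: fun_eq_iff indicator_def I_def)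
    then show ?thesis by simp
  qed
  also have "(\<integral>\<^sup>+s. (I s * ennreal \<bar>a s\<bar>)\<^sup>2 \<partial>lborel) \<le>
      (\<integral>\<^sup>+ s. ennreal ((norm h)\<^sup>2) * (I s * ennreal ((norm (G (x + s *\<^sub>R h)))\<^sup>2)) \<partial>lborel)"
  proof (intro nn_integral_mono)
    fix s
    have "\<bar>a s\<bar> \<le> norm (G (x + s *\<^sub>R h)) * norm h" unfolding a_def by (rule Cauchy_Schwarz_ineq2)
    then have "(a s)\<^sup>2 \<le> (norm h)\<^sup>2 * (norm (G (x + s *\<^sub>R h)))\<^sup>2"
      by (metis abs_ge_zero power2_abs power_mono mult.commute power_mult_distrib)
    then show "(I s * ennreal \<bar>a s\<bar>)\<^sup>2 \<le> ennreal ((norm h)\<^sup>2) * (I s * ennreal ((norm (G (x + s *\<^sub>R h)))\<^sup>2))"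
      by (cases "s \<in> {0..1}") (auto simp: I_def ennreal_power power2_abs ennreal_mult[symmetric] intro: ennreal_leI)
  qed
  also have "\<dots> = ennreal ((norm h)\<^sup>2) * (\<integral>\<^sup>+ s. I s * ennreal ((norm (G (x + s *\<^sub>R h)))\<^sup>2) \<partial>lborel)"
    by (rule nn_integral_cmult) (use Gm in \<open>simp add: I_def\<close>)
  finally show ?thesis by (simp add: I_def ennreal_power power2_abs)
qed

lemma cc1_fun_translation_estimate:
  assumes "cc1_fun U \<phi> G"
  shows "L2_sqnorm (\<lambda>x. \<phi> (x + h) - \<phi> x) \<le> ennreal ((norm h)\<^sup>2) * L2_sqnorm G"
proof -
  have Gm: "G \<in> borel_measurable borel" by (rule cc1_fun_gradient_measurable[OF assms])
  define F where "F x s = indicator {0..1::real} s * ennreal ((norm (G (x + s *\<^sub>R h)))\<^sup>2)" for x s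
  have Fm: "case_prod F \<in> borel_measurable (lborel \<Otimes>\<^sub>M lborel)"
    unfolding F_def using Gm by measurable
  have "L2_sqnorm (\<lambda>x. \<phi> (x + h) - \<phi> x) \<le> (\<integral>\<^sup>+ x. ennreal ((norm h)\<^sup>2) * (\<integral>\<^sup>+ s. F x s \<partial>lborel) \<partial>lborel)"
    unfolding L2_sqnorm_real F_def by (intro nn_integral_mono cc1_fun_increment_square_le[OF assms])
  also have "\<dots> = ennreal ((norm h)\<^sup>2) * (\<integral>\<^sup>+ x. (\<integral>\<^sup>+ s. F x s \<partial>lborel) \<partial>lborel)"
    by (rule nn_integral_cmult) (use lborel.borel_measurable_nn_integral[OF Fm] in simp)
  also have "(\<integral>\<^sup>+ x. (\<integral>\<^sup>+ s. F x s \<partial>lborel) \<partial>lborel) = (\<integral>\<^sup>+ s. (\<integral>\<^sup>+ x. F x s \<partial>lborel) \<partial>lborel)"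
    by (rule lborel_pair.Fubini'[symmetric, OF Fm])
  also have "\<dots> = (\<integral>\<^sup>+ s. indicator {0..1::real} s * L2_sqnorm G \<partial>lborel)"
  proof (intro nn_integral_cong)
    fix s :: real
    have "(\<integral>\<^sup>+ x. F x s \<partial>lborel) = indicator {0..1::real} s * L2_sqnorm (\<lambda>x. G (x + s *\<^sub>R h))"
      unfolding F_def L2_sqnorm_def using Gm by (subst nn_integral_cmult) auto
    then show "(\<integral>\<^sup>+ x. F x s \<partial>lborel) = indicator {0..1::real} s * L2_sqnorm G"
      using L2_sqnorm_translate[OF Gm] by simp
  qed
  also have "\<dots> = L2_sqnorm G" by (simp add: mult.commute nn_integral_cmult_indicator)
  finally show ?thesis .
qed

lemma L2_sqnorm_approx_le:
  fixes g G :: "'a::euclidean_space \<Rightarrow> 'b::euclidean_space"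
  assumes "g \<in> borel_measurable borel" "G \<in> borel_measurable borel"
  shows "L2_sqnorm G \<le> 2 * L2_sqnorm (\<lambda>x. g x - G x) + 2 * L2_sqnorm g"
proof (rule L2_sqnorm_triangle)
  show "(\<lambda>x. g x - G x) \<in> borel_measurable borel" using assms by (rule borel_measurable_diff)
  show "norm (G x) \<le> norm (g x - G x) + norm (g x)" for x
    using norm_triangle_sub[of "G x" "g x"] by (simp add: norm_minus_commute add.commute)
qed (rule assms(1))

lemma H10_grad_translation_estimate:
  assumes "H10_grad U f g"
  shows "L2_sqnorm (\<lambda>x. f (x + h) - f x) \<le> 6 * ennreal ((norm h)\<^sup>2) * L2_sqnorm g"
proof -
  obtain \<phi> G where a: "\<And>n. cc1_fun U (\<phi> n) (G n)" "(\<lambda>n. L2_sqnorm (\<lambda>x. f x - \<phi> n x)) \<longlonglongrightarrow> 0"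
    "(\<lambda>n. L2_sqnorm (\<lambda>x. g x - G n x)) \<longlonglongrightarrow> 0"
    using H10_grad_approx[OF assms] by blast
  have m: "f \<in> borel_measurable borel" "g \<in> borel_measurable borel"
    "\<phi> n \<in> borel_measurable borel" "G n \<in> borel_measurable borel" for n
    using H10_grad_measurable[OF assms] H10_grad_gradient_measurable[OF assms]
      cc1_fun_measurable[OF a(1)] cc1_fun_gradient_measurable[OF a(1)] by auto
  have hm: "(\<lambda>x. f x - \<phi> n x) \<in> borel_measurable borel" for n using m by auto
  show ?thesis
  proof (rule ennreal_le_of_le_add_tendsto_0)
    show "(\<lambda>n. 3 * L2_sqnorm (\<lambda>x. f x - \<phi> n x) + 3 * L2_sqnorm (\<lambda>x. f x - \<phi> n x)
        + 6 * ennreal ((norm h)\<^sup>2) * L2_sqnorm (\<lambda>x. g x - G n x)) \<longlonglongrightarrow> 0"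
      using tendsto_add[OF tendsto_add[OF ennreal_tendsto_cmult_0[OF a(2), of 3] ennreal_tendsto_cmult_0[OF a(2), of 3]]
          ennreal_tendsto_cmult_0[OF a(3), of "6 * ennreal ((norm h)\<^sup>2)"]]
      by (simp add: ennreal_mult_less_top)
    fix n
    have "L2_sqnorm (\<lambda>x. f (x + h) - f x) \<le> 3 * L2_sqnorm (\<lambda>x. f (x + h) - \<phi> n (x + h))
        + 3 * L2_sqnorm (\<lambda>x. \<phi> n (x + h) - \<phi> n x) + 3 * L2_sqnorm (\<lambda>x. f x - \<phi> n x)"
      using m measurable_compose[OF _ hm[of n], of "\<lambda>x. x + h"] measurable_compose[OF _ m(3)[of n], of "\<lambda>x. x + h"]
      by (intro L2_sqnorm_triangle3) (auto simp: o_def abs_minus_commute abs_triangle_ineq[THEN order_trans] abs_diff_triangle_ineq)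
    also have "L2_sqnorm (\<lambda>x. f (x + h) - \<phi> n (x + h)) = L2_sqnorm (\<lambda>x. f x - \<phi> n x)"
      using L2_sqnorm_translate[OF hm[of n]] by simp
    also have "L2_sqnorm (\<lambda>x. \<phi> n (x + h) - \<phi> n x) \<le> ennreal ((norm h)\<^sup>2) * (2 * L2_sqnorm (\<lambda>x. g x - G n x) + 2 * L2_sqnorm g)"
      using cc1_fun_translation_estimate[OF a(1)] L2_sqnorm_approx_le[OF m(2,4)]
      by (rule order_trans[OF _ mult_left_mono]) simp
    finally show "L2_sqnorm (\<lambda>x. f (x + h) - f x) \<le> 6 * ennreal ((norm h)\<^sup>2) * L2_sqnorm g +
        (3 * L2_sqnorm (\<lambda>x. f x - \<phi> n x) + 3 * L2_sqnorm (\<lambda>x. f x - \<phi> n x)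
          + 6 * ennreal ((norm h)\<^sup>2) * L2_sqnorm (\<lambda>x. g x - G n x))"
      by (simp add: algebra_simps mult_right_mono)
  qed
qed

lemma poincare_cc1_fun:
  assumes "\<And>x. x \<in> \<Omega> \<Longrightarrow> norm x \<le> R" "R \<ge> 0" "cc1_fun \<Omega> \<phi> G"
  shows "L2_sqnorm \<phi> \<le> ennreal ((2 * R + 1)\<^sup>2) * L2_sqnorm G"
proof -
  obtain b :: 'a where b: "b \<in> Basis" using nonempty_Basis by blast
  define h where "h = (2 * R + 1) *\<^sub>R b"
  have nh: "norm h = 2 * R + 1" using b assms(2) by (simp add: h_def)
  obtain C where C: "compact C" "C \<subseteq> \<Omega>" "\<And>x. x \<notin> C \<Longrightarrow> \<phi> x = 0" "\<And>x. x \<notin> C \<Longrightarrow> G x = 0"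
    using cc1_fun_support[OF assms(3)] by blast
  have "norm (\<phi> x) \<le> norm (\<phi> (x + h) - \<phi> x)" for x
  proof (cases "x \<in> C")
    case True
    then have "norm x \<le> R" using C assms(1) by blast
    moreover have "norm h \<le> norm (x + h) + norm x" using norm_triangle_sub[of h "x + h"] by simp
    ultimately have "norm (x + h) > R" using nh assms(2) by linarith
    then have "\<phi> (x + h) = 0" using C assms(1) by (meson not_le subsetD)
    then show ?thesis by simp
  qed (use C in simp)
  then have "L2_sqnorm \<phi> \<le> L2_sqnorm (\<lambda>x. \<phi> (x + h) - \<phi> x)" by (rule L2_sqnorm_mono)
  also have "\<dots> \<le> ennreal ((norm h)\<^sup>2) * L2_sqnorm G" by (rule cc1_fun_translation_estimate[OF assms(3)])
  finally show ?thesis unfolding nh .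
qed

lemma poincare_H10_grad_le:
  assumes "\<And>x. x \<in> \<Omega> \<Longrightarrow> norm x \<le> R" "R \<ge> 0" "H10_grad \<Omega> f g"
  shows "L2_sqnorm f \<le> ennreal (4 * (2 * R + 1)\<^sup>2) * L2_sqnorm g"
proof -
  define k where "k = (2 * R + 1)\<^sup>2"
  obtain \<phi> G where a: "\<And>n. cc1_fun \<Omega> (\<phi> n) (G n)" "(\<lambda>n. L2_sqnorm (\<lambda>x. f x - \<phi> n x)) \<longlonglongrightarrow> 0"
    "(\<lambda>n. L2_sqnorm (\<lambda>x. g x - G n x)) \<longlonglongrightarrow> 0"
    using H10_grad_approx[OF assms(3)] by blast
  have m: "f \<in> borel_measurable borel" "g \<in> borel_measurable borel"
    "\<phi> n \<in> borel_measurable borel" "G n \<in> borel_measurable borel" for n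
    using H10_grad_measurable[OF assms(3)] H10_grad_gradient_measurable[OF assms(3)]
      cc1_fun_measurable[OF a(1)] cc1_fun_gradient_measurable[OF a(1)] by auto
  show ?thesis unfolding k_def[symmetric]
  proof (rule ennreal_le_of_le_add_tendsto_0)
    show "(\<lambda>n. 2 * L2_sqnorm (\<lambda>x. f x - \<phi> n x) + ennreal (4 * k) * L2_sqnorm (\<lambda>x. g x - G n x)) \<longlonglongrightarrow> 0"
      using tendsto_add[OF ennreal_tendsto_cmult_0[OF a(2), of 2] ennreal_tendsto_cmult_0[OF a(3), of "ennreal (4 * k)"]]
      by simp
    fix n
    have "L2_sqnorm f \<le> 2 * L2_sqnorm (\<lambda>x. f x - \<phi> n x) + 2 * L2_sqnorm (\<phi> n)"
      by (rule L2_sqnorm_triangle) (use m in \<open>auto intro: norm_triangle_sub[THEN order_trans] simp: add.commute\<close>)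
    also have "L2_sqnorm (\<phi> n) \<le> ennreal k * (2 * L2_sqnorm (\<lambda>x. g x - G n x) + 2 * L2_sqnorm g)"
      using poincare_cc1_fun[OF assms(1,2) a(1)] L2_sqnorm_approx_le[OF m(2,4)] unfolding k_def
      by (rule order_trans[OF _ mult_left_mono]) simp_all
    finally have "L2_sqnorm f \<le> 2 * L2_sqnorm (\<lambda>x. f x - \<phi> n x) +
        2 * (ennreal k * (2 * L2_sqnorm (\<lambda>x. g x - G n x) + 2 * L2_sqnorm g))"
      by (simp add: mult_left_mono)
    also have "\<dots> = ennreal (4 * k) * L2_sqnorm g +
        (2 * L2_sqnorm (\<lambda>x. f x - \<phi> n x) + ennreal (4 * k) * L2_sqnorm (\<lambda>x. g x - G n x))"
      by (simp add: algebra_simps ennreal_mult k_def)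
    finally show "L2_sqnorm f \<le> ennreal (4 * k) * L2_sqnorm g +
        (2 * L2_sqnorm (\<lambda>x. f x - \<phi> n x) + ennreal (4 * k) * L2_sqnorm (\<lambda>x. g x - G n x))" .
  qed
qed

lemma poincare_H10_grad:
  assumes "bounded \<Omega>"
  obtains c where "c \<ge> 0" "\<And>f g. H10_grad \<Omega> f g \<Longrightarrow> L2_sqnorm f \<le> ennreal c * L2_sqnorm g"
proof -
  obtain R where R: "\<And>x. x \<in> \<Omega> \<Longrightarrow> norm x \<le> R" "R \<ge> 0"
    using assms bounded_iff by (metis abs_ge_zero abs_ge_self order_trans)
  have "0 \<le> 4 * (2 * R + 1)\<^sup>2" by simp
  from this poincare_H10_grad_le[OF R] show ?thesis by (rule that)
qed

section \<open>Averages over a grid of cubes\<close>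

text \<open>The grid cells are the half-open cubes \<open>\<Prod>\<^sub>b [r k\<^sub>b, r (k\<^sub>b + 1))\<close>; their integer index
  vectors \<open>k\<close> are functions on \<open>Basis\<close>, extensional so that each cell has a unique index.\<close>

definition grid_index :: "real \<Rightarrow> 'a::euclidean_space \<Rightarrow> ('a \<Rightarrow> int)" where
  "grid_index r x = restrict (\<lambda>b. \<lfloor>(x \<bullet> b) / r\<rfloor>) Basis"

definition grid_cell :: "real \<Rightarrow> ('a::euclidean_space \<Rightarrow> int) \<Rightarrow> 'a set" where
  "grid_cell r k = {y. grid_index r y = k}"

definition cell_average :: "real \<Rightarrow> ('a::euclidean_space \<Rightarrow> real) \<Rightarrow> ('a \<Rightarrow> int) \<Rightarrow> real" where
  "cell_average r u k = (\<integral>y. indicator (grid_cell r k) y * u y \<partial>lborel) / r ^ DIM('a)"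

definition grid_projection :: "real \<Rightarrow> ('a::euclidean_space \<Rightarrow> int) set \<Rightarrow> ('a \<Rightarrow> real) \<Rightarrow> 'a \<Rightarrow> real" where
  "grid_projection r Ks u x = (if grid_index r x \<in> Ks then cell_average r u (grid_index r x) else 0)"

definition open_cube :: "real \<Rightarrow> 'a::euclidean_space set" where
  "open_cube r = box (- (\<Sum>b\<in>Basis. r *\<^sub>R b)) (\<Sum>b\<in>Basis. r *\<^sub>R b)"

lemma inner_sum_Basis_scaleR:
  fixes c :: "'a::euclidean_space \<Rightarrow> real"
  assumes "i \<in> Basis" shows "(\<Sum>b\<in>Basis. c b *\<^sub>R b) \<bullet> i = c i"
  using assms by (simp add: inner_sum_left inner_Basis if_distrib sum.delta cong: if_cong)

lemma grid_index_extensional: "grid_index r x \<in> extensional Basis"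
  unfolding grid_index_def by simp

lemma grid_index_eq_iff: "grid_index r y = grid_index r x \<longleftrightarrow> (\<forall>b\<in>Basis. \<lfloor>(y \<bullet> b) / r\<rfloor> = \<lfloor>(x \<bullet> b) / r\<rfloor>)"
  unfolding grid_index_def by (auto simp: fun_eq_iff restrict_def)

lemma mem_grid_cell_iff:
  assumes "k \<in> extensional Basis"
  shows "y \<in> grid_cell r k \<longleftrightarrow> (\<forall>b\<in>Basis. \<lfloor>(y \<bullet> b) / r\<rfloor> = k b)"
proof
  assume "y \<in> grid_cell r k" then show "\<forall>b\<in>Basis. \<lfloor>(y \<bullet> b) / r\<rfloor> = k b"
    unfolding grid_cell_def grid_index_def by auto
next
  assume h: "\<forall>b\<in>Basis. \<lfloor>(y \<bullet> b) / r\<rfloor> = k b"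
  have "restrict (\<lambda>b. \<lfloor>(y \<bullet> b) / r\<rfloor>) Basis b = k b" for b
    using h assms by (cases "b \<in> Basis") (auto simp: extensional_def)
  then show "y \<in> grid_cell r k" unfolding grid_cell_def grid_index_def by auto
qed

lemma grid_cell_sets: "grid_cell r k \<in> sets lborel"
proof (cases "k \<in> extensional Basis")
  case True
  have "grid_cell r k = (\<Inter>b\<in>Basis. {y. \<lfloor>(y \<bullet> b) / r\<rfloor> = k b})"
    using mem_grid_cell_iff[OF True] by auto
  also have "\<dots> \<in> sets lborel" by (intro sets.finite_INT) (auto)
  finally show ?thesis .
next
  case False
  then have "grid_cell r k = {}" unfolding grid_cell_def using grid_index_extensional by blast
  then show ?thesis by simp
qed

lemma floor_divide_eq_imp_abs_diff_less:
  fixes a b c :: real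
  assumes "\<lfloor>a / c\<rfloor> = \<lfloor>b / c\<rfloor>" "c > 0"
  shows "\<bar>a - b\<bar> < c"
proof -
  have "of_int \<lfloor>a / c\<rfloor> \<le> a / c" "a / c < of_int \<lfloor>a / c\<rfloor> + 1"
    "of_int \<lfloor>b / c\<rfloor> \<le> b / c" "b / c < of_int \<lfloor>b / c\<rfloor> + 1"
    by (simp_all add: floor_correct)
  then have "\<bar>a / c - b / c\<bar> < 1" using assms(1) by linarith
  then show ?thesis using assms(2) by (simp add: diff_divide_distrib[symmetric] abs_div divide_less_eq)
qed

lemma floor_divide_mem_bounded:
  fixes a c :: real
  assumes "\<bar>a\<bar> \<le> B" "c > 0"
  shows "\<lfloor>a / c\<rfloor> \<in> {-\<lceil>B / c\<rceil>..\<lceil>B / c\<rceil>}"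
proof -
  have "\<bar>a / c\<bar> \<le> B / c" using assms by (simp add: abs_div divide_right_mono)
  moreover have "B / c \<le> of_int \<lceil>B / c\<rceil>" by (rule le_of_int_ceiling)
  ultimately have "of_int (- \<lceil>B / c\<rceil>) \<le> a / c" "a / c < of_int \<lceil>B / c\<rceil> + 1"
    unfolding abs_le_iff of_int_minus by linarith+
  then show ?thesis unfolding atLeastAtMost_iff le_floor_iff floor_le_iff by blast
qed

lemma abs_le_of_floor_divide_mem:
  fixes a c :: real
  assumes "\<lfloor>a / c\<rfloor> \<in> {-N..N}" "c > 0"
  shows "\<bar>a\<bar> \<le> (of_int N + 1) * c"
proof -
  have "of_int (- N) \<le> a / c" "a / c < of_int N + 1"
    using assms(1) unfolding atLeastAtMost_iff le_floor_iff floor_le_iff by auto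
  then have "- (of_int N + 1) * c \<le> a" "a \<le> (of_int N + 1) * c"
    using assms(2) by (auto simp: field_simps)
  then show ?thesis by (simp add: abs_le_iff algebra_simps)
qed

lemma grid_cell_subset_open_cube:
  assumes "r > 0" "y \<in> grid_cell r (grid_index r x)"
  shows "y - x \<in> open_cube r"
proof -
  have "\<bar>y \<bullet> b - x \<bullet> b\<bar> < r" if "b \<in> Basis" for b
    using assms that unfolding grid_cell_def grid_index_eq_iff
    by (intro floor_divide_eq_imp_abs_diff_less) auto
  then have "- r < (y - x) \<bullet> b \<and> (y - x) \<bullet> b < r" if "b \<in> Basis" for b
    using that unfolding inner_diff_left abs_less_iff by fastforce
  moreover have "(\<Sum>b\<in>Basis. r *\<^sub>R b) \<bullet> i = r" if "i \<in> Basis" for i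
    using inner_sum_Basis_scaleR[OF that, of "\<lambda>_. r"] by simp
  ultimately show ?thesis unfolding open_cube_def mem_box by (simp add: inner_minus_left)
qed

lemma emeasure_grid_cell:
  fixes k :: "'a::euclidean_space \<Rightarrow> int"
  assumes "r > 0" "k \<in> extensional Basis"
  shows "emeasure lborel (grid_cell r k) = ennreal (r ^ DIM('a))"
proof -
  define l :: 'a where "l = (\<Sum>b\<in>Basis. (r * k b) *\<^sub>R b)"
  define u :: 'a where "u = (\<Sum>b\<in>Basis. (r * k b + r) *\<^sub>R b)"
  have lb: "l \<bullet> b = r * k b" "u \<bullet> b = r * k b + r" if "b \<in> Basis" for b
    using inner_sum_Basis_scaleR[OF that] unfolding l_def u_def by auto
  have floor_iff: "\<lfloor>(y \<bullet> b) / r\<rfloor> = k b \<longleftrightarrow> r * k b \<le> y \<bullet> b \<and> y \<bullet> b < r * k b + r" for y b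
    using assms(1) by (simp add: floor_eq_iff field_simps)
  have c: "y \<in> grid_cell r k \<longleftrightarrow> (\<forall>b\<in>Basis. r * k b \<le> y \<bullet> b \<and> y \<bullet> b < r * k b + r)" for y
    using mem_grid_cell_iff[OF assms(2)] floor_iff by auto
  have s1: "box l u \<subseteq> grid_cell r k"
  proof
    fix y assume "y \<in> box l u"
    then have "\<forall>b\<in>Basis. r * k b < y \<bullet> b \<and> y \<bullet> b < r * k b + r" by (auto simp: mem_box lb)
    then show "y \<in> grid_cell r k" unfolding c by (auto intro: less_imp_le)
  qed
  have s2: "grid_cell r k \<subseteq> cbox l u" using c by (auto simp: mem_box lb less_imp_le)
  have m1: "emeasure lborel (box l u) = ennreal (r ^ DIM('a))"
    using assms(1) by (simp add: emeasure_lborel_box_eq lb inner_diff_left prod_constant)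
  have m2: "emeasure lborel (cbox l u) = ennreal (r ^ DIM('a))"
    using assms(1) by (simp add: emeasure_lborel_cbox_eq lb inner_diff_left prod_constant)
  have "emeasure lborel (box l u) \<le> emeasure lborel (grid_cell r k)" by (rule emeasure_mono[OF s1 grid_cell_sets])
  moreover have "emeasure lborel (grid_cell r k) \<le> emeasure lborel (cbox l u)" by (rule emeasure_mono[OF s2]) simp
  ultimately show ?thesis using m1 m2 by (simp add: antisym)
qed

lemma emeasure_open_cube:
  assumes "r > 0"
  shows "emeasure lborel (open_cube r :: 'a::euclidean_space set) = ennreal ((2*r) ^ DIM('a))"
proof -
  have s: "(\<Sum>b\<in>Basis. r *\<^sub>R b) \<bullet> i = r" if "i \<in> (Basis::'a set)" for i
    using inner_sum_Basis_scaleR[OF that, of "\<lambda>_. r"] by simp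
  define U :: 'a where "U = (\<Sum>b\<in>Basis. r *\<^sub>R b)"
  have d: "(U - (- U)) \<bullet> i = 2 * r" if "i \<in> Basis" for i
    using s[OF that] unfolding U_def by (simp add: inner_diff_left inner_minus_left inner_add_left)
  have le: "(- U) \<bullet> i \<le> U \<bullet> i" if "i \<in> Basis" for i
    using s[OF that] assms unfolding U_def by (simp add: inner_minus_left)
  have "emeasure lborel (open_cube r :: 'a set) = ennreal (\<Prod>b\<in>(Basis::'a set). (U - (- U)) \<bullet> b)"
    unfolding open_cube_def U_def[symmetric] by (rule emeasure_lborel_box[OF le])
  also have "(\<Prod>b\<in>(Basis::'a set). (U - (- U)) \<bullet> b) = (\<Prod>b\<in>(Basis::'a set). 2 * r)"
    by (rule prod.cong[OF refl d])
  also have "\<dots> = (2*r) ^ DIM('a)" by (simp add: prod_constant)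
  finally show ?thesis .
qed

lemma norm_le_of_mem_open_cube:
  fixes h :: "'a::euclidean_space" and r :: real
  assumes "h \<in> open_cube r"
  shows "norm h \<le> real DIM('a) * r" and "r > 0 \<Longrightarrow> (norm h)\<^sup>2 \<le> (real DIM('a) * r)\<^sup>2"
proof -
  have s: "(\<Sum>b\<in>Basis. r *\<^sub>R b) \<bullet> i = r" if "i \<in> (Basis::'a set)" for i
    using inner_sum_Basis_scaleR[OF that, of "\<lambda>_. r"] by simp
  have "\<bar>h \<bullet> b\<bar> \<le> r" if "b \<in> Basis" for b
    using assms that s unfolding open_cube_def mem_box by (force simp: inner_minus_left abs_le_iff)
  then have "(\<Sum>b\<in>Basis. \<bar>h \<bullet> b\<bar>) \<le> (\<Sum>b\<in>(Basis::'a set). r)" by (intro sum_mono) auto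
  then show n: "norm (h::'a) \<le> real DIM('a) * r" using norm_le_l1[of h] by simp
  show "r > 0 \<Longrightarrow> (norm h)\<^sup>2 \<le> (real DIM('a) * r)\<^sup>2" using n by (intro power_mono) auto
qed

lemma grid_cell_deviation_le_open_cube:
  fixes u :: "'a::euclidean_space \<Rightarrow> real"
  assumes "r > 0" "u \<in> borel_measurable borel"
  shows "(\<integral>\<^sup>+ y. indicator (grid_cell r (grid_index r x)) y * ennreal ((u y - u x)\<^sup>2) \<partial>lborel) \<le>
    (\<integral>\<^sup>+ h. indicator (open_cube r) h * ennreal ((u (x + h) - u x)\<^sup>2) \<partial>lborel)"
proof -
  have "(\<integral>\<^sup>+ y. indicator (grid_cell r (grid_index r x)) y * ennreal ((u y - u x)\<^sup>2) \<partial>lborel) \<le>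
    (\<integral>\<^sup>+ y. indicator (open_cube r) (y - x) * ennreal ((u y - u x)\<^sup>2) \<partial>lborel)"
  proof (intro nn_integral_mono)
    fix y show "indicator (grid_cell r (grid_index r x)) y * ennreal ((u y - u x)\<^sup>2) \<le> indicator (open_cube r) (y - x) * ennreal ((u y - u x)\<^sup>2)"
      using grid_cell_subset_open_cube[OF assms(1), of y x] unfolding open_cube_def by (auto simp: indicator_def)
  qed
  also have "\<dots> = (\<integral>\<^sup>+ h. indicator (open_cube r) h * ennreal ((u (x + h) - u x)\<^sup>2) \<partial>lborel)"
  proof -
    have "(\<lambda>y. indicator (open_cube r) (y - x) * ennreal ((u y - u x)\<^sup>2)) \<in> borel_measurable borel"
      using assms(2) unfolding open_cube_def by measurable
    from nn_integral_lborel_translate[OF this, of x] show ?thesis by (simp add: add.commute)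
  qed
  finally show ?thesis .
qed

lemma average_deviation_square_le:
  fixes u :: "'a::euclidean_space \<Rightarrow> real"
  assumes "A \<in> sets lborel" "emeasure lborel A = ennreal m" "m > 0" "square_integrable u"
  shows "ennreal (((\<integral>y. indicator A y * u y \<partial>lborel) / m - c)\<^sup>2) \<le>
    ennreal (1 / m) * (\<integral>\<^sup>+ y. indicator A y * ennreal ((u y - c)\<^sup>2) \<partial>lborel)"
proof -
  define I where "I = (indicator A :: 'a \<Rightarrow> real)"
  define b where "b y = I y * u y - c * I y" for y
  have I: "I \<in> borel_measurable borel" "L2_sqnorm I = ennreal m"
    using L2_sqnorm_indicator[OF assms(1)] assms(1,2) unfolding I_def by auto
  then have sq_I: "square_integrable I" unfolding square_integrable_def by simp
  have "L2_sqnorm (\<lambda>y. I y * u y) \<le> L2_sqnorm u" by (rule L2_sqnorm_mono) (auto simp: I_def indicator_def)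
  then have sq_Iu: "square_integrable (\<lambda>y. I y * u y)"
    using assms(4) I(1) unfolding square_integrable_def by auto
  have "L2_sqnorm (\<lambda>y. c * I y) \<le> ennreal (\<bar>c\<bar>\<^sup>2) * L2_sqnorm I"
    by (rule L2_sqnorm_le_scaled[OF _ _ I(1)]) (auto simp: abs_mult)
  also have "\<dots> < \<infinity>" using I(2) by (simp add: ennreal_mult_less_top)
  finally have sq_cI: "square_integrable (\<lambda>y. c * I y)"
    using I(1) unfolding square_integrable_def by simp
  have sq_b: "square_integrable b" unfolding b_def by (rule square_integrable_diff[OF sq_Iu sq_cI])
  have "(\<integral>y. I y * b y \<partial>lborel) = (\<integral>y. I y * u y - c * I y \<partial>lborel)"
    by (intro Bochner_Integration.integral_cong) (auto simp: b_def I_def indicator_def)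
  also have "\<dots> = (\<integral>y. I y * u y \<partial>lborel) - c * m"
    using integrable_mult_square_integrable[OF sq_I assms(4)] assms(1,2) less_imp_le[OF assms(3)]
    by (simp add: I_def measure_def)
  finally have avg: "(\<integral>y. I y * u y \<partial>lborel) / m - c = (\<integral>y. I y * b y \<partial>lborel) / m"
    using assms(3) by (simp add: diff_divide_distrib)
  define J where "J = \<bar>\<integral>y. I y * b y \<partial>lborel\<bar>"
  have "ennreal (J\<^sup>2) \<le> ennreal m * L2_sqnorm b"
    using integral_mult_square_le[OF sq_I sq_b] unfolding J_def I(2) by (simp add: ennreal_power)
  have "ennreal (((\<integral>y. I y * b y \<partial>lborel) / m)\<^sup>2) = ennreal (J\<^sup>2) * ennreal (1 / m\<^sup>2)"
    unfolding J_def using assms(3) by (simp add: ennreal_mult[symmetric] power_divide power2_abs)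
  also have "\<dots> \<le> ennreal m * L2_sqnorm b * ennreal (1 / m\<^sup>2)"
    by (intro mult_right_mono \<open>ennreal (J\<^sup>2) \<le> ennreal m * L2_sqnorm b\<close>) auto
  also have "\<dots> = (ennreal m * ennreal (1 / m\<^sup>2)) * L2_sqnorm b" by (simp only: ac_simps)
  also have "ennreal m * ennreal (1 / m\<^sup>2) = ennreal (m * (1 / m\<^sup>2))"
    by (rule ennreal_mult[symmetric]) (use assms(3) in auto)
  also have "m * (1 / m\<^sup>2) = 1 / m" using assms(3) by (simp add: power2_eq_square)
  also have "L2_sqnorm b = (\<integral>\<^sup>+ y. indicator A y * ennreal ((u y - c)\<^sup>2) \<partial>lborel)"
    unfolding L2_sqnorm_def b_def I_def by (intro nn_integral_cong) (auto simp: indicator_def)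
  finally show ?thesis unfolding I_def[symmetric] avg .
qed

lemma grid_projection_deviation_le:
  fixes u :: "'a::euclidean_space \<Rightarrow> real"
  assumes "r > 0" "square_integrable u" "grid_index r x \<in> Ks"
  shows "ennreal ((u x - grid_projection r Ks u x)\<^sup>2) \<le>
    ennreal (1 / r ^ DIM('a)) * (\<integral>\<^sup>+ h. indicator (open_cube r) h * ennreal ((u (x + h) - u x)\<^sup>2) \<partial>lborel)"
proof -
  have "ennreal ((u x - grid_projection r Ks u x)\<^sup>2) = ennreal ((cell_average r u (grid_index r x) - u x)\<^sup>2)"
    using assms(3) by (simp add: grid_projection_def power2_commute)
  also have "\<dots> \<le> ennreal (1 / r ^ DIM('a)) *
      (\<integral>\<^sup>+ y. indicator (grid_cell r (grid_index r x)) y * ennreal ((u y - u x)\<^sup>2) \<partial>lborel)"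
    unfolding cell_average_def using assms(1,2)
    by (intro average_deviation_square_le grid_cell_sets emeasure_grid_cell grid_index_extensional) auto
  also have "\<dots> \<le> ennreal (1 / r ^ DIM('a)) *
      (\<integral>\<^sup>+ h. indicator (open_cube r) h * ennreal ((u (x + h) - u x)\<^sup>2) \<partial>lborel)"
    using assms(2) unfolding square_integrable_def
    by (intro mult_left_mono grid_cell_deviation_le_open_cube[OF assms(1)]) auto
  finally show ?thesis .
qed

lemma grid_projection_eq_sum:
  assumes "finite Ks"
  shows "grid_projection r Ks u x = (\<Sum>k\<in>Ks. cell_average r u k * indicator (grid_cell r k) x)"
proof -
  have "(\<Sum>k\<in>Ks. cell_average r u k * indicator (grid_cell r k) x) = (\<Sum>k\<in>Ks. if grid_index r x = k then cell_average r u k else 0)"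
    by (intro sum.cong) (auto simp: grid_cell_def indicator_def)
  also have "\<dots> = (if grid_index r x \<in> Ks then cell_average r u (grid_index r x) else 0)"
    using assms by (simp add: sum.delta)
  finally show ?thesis unfolding grid_projection_def by simp
qed

lemma grid_projection_measurable:
  assumes "finite Ks"
  shows "grid_projection r Ks u \<in> borel_measurable borel"
proof -
  have "grid_projection r Ks u = (\<lambda>x. \<Sum>k\<in>Ks. cell_average r u k * indicator (grid_cell r k) x)" using grid_projection_eq_sum[OF assms] by auto
  moreover have "(\<lambda>x. \<Sum>k\<in>Ks. cell_average r u k * indicator (grid_cell r k) x) \<in> borel_measurable borel"
    using grid_cell_sets by (intro borel_measurable_sum borel_measurable_times borel_measurable_const borel_measurable_indicator) auto
  ultimately show ?thesis by simp
qed

lemma cell_average_abs_le: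
  fixes u :: "'a::euclidean_space \<Rightarrow> real"
  assumes "r > 0" "square_integrable u" "L2_sqnorm u \<le> 1" "k \<in> extensional Basis"
  shows "\<bar>cell_average r u k\<bar> \<le> sqrt (r ^ DIM('a)) / r ^ DIM('a)"
proof -
  define I where "I = (indicator (grid_cell r k) :: 'a \<Rightarrow> real)"
  have cs: "grid_cell r k \<in> sets lborel" by (rule grid_cell_sets)
  have NLI: "L2_sqnorm I = ennreal (r ^ DIM('a))" unfolding I_def by (simp add: L2_sqnorm_indicator[OF cs] emeasure_grid_cell[OF assms(1,4)])
  have LI: "square_integrable I" unfolding square_integrable_def I_def using cs NLI by (simp add: I_def)
  have "ennreal ((\<bar>\<integral>y. I y * u y \<partial>lborel\<bar>)\<^sup>2) \<le> L2_sqnorm I * L2_sqnorm u"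
    using integral_mult_square_le[OF LI assms(2)] by (simp add: ennreal_power)
  also have "\<dots> \<le> ennreal (r ^ DIM('a)) * 1" unfolding NLI by (intro mult_left_mono assms(3)) auto
  finally have "(\<bar>\<integral>y. I y * u y \<partial>lborel\<bar>)\<^sup>2 \<le> r ^ DIM('a)" using assms(1) by (simp add: ennreal_le_iff)
  then have "\<bar>\<integral>y. I y * u y \<partial>lborel\<bar> \<le> sqrt (r ^ DIM('a))" by (simp add: real_le_rsqrt)
  then show ?thesis unfolding cell_average_def I_def using assms(1) by (simp add: abs_div divide_right_mono)
qed

lemma nn_integral_increment_open_cube_le:
  fixes u :: "'a::euclidean_space \<Rightarrow> real"
  assumes "H10_grad \<Omega> u g" "r > 0"
  shows "(\<integral>\<^sup>+ x. (\<integral>\<^sup>+ h. indicator (open_cube r) h * ennreal ((u (x + h) - u x)\<^sup>2) \<partial>lborel) \<partial>lborel)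
    \<le> ennreal (6 * (real DIM('a) * r)\<^sup>2 * (2 * r) ^ DIM('a)) * L2_sqnorm g"
proof -
  define F where "F x h = indicator (open_cube r) h * ennreal ((u (x + h) - u x)\<^sup>2)" for x h :: 'a
  have um: "u \<in> borel_measurable borel" by (rule H10_grad_measurable[OF assms(1)])
  then have Fm: "case_prod F \<in> borel_measurable (lborel \<Otimes>\<^sub>M lborel)"
    unfolding F_def open_cube_def by measurable
  have "(\<integral>\<^sup>+ x. (\<integral>\<^sup>+ h. F x h \<partial>lborel) \<partial>lborel) = (\<integral>\<^sup>+ h. (\<integral>\<^sup>+ x. F x h \<partial>lborel) \<partial>lborel)"
    by (rule lborel_pair.Fubini'[symmetric, OF Fm])
  also have "\<dots> = (\<integral>\<^sup>+ h. indicator (open_cube r) h * L2_sqnorm (\<lambda>x. u (x + h) - u x) \<partial>lborel)"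
    unfolding F_def L2_sqnorm_real using um by (intro nn_integral_cong) (subst nn_integral_cmult, auto)
  also have "\<dots> \<le> (\<integral>\<^sup>+ h. (6 * ennreal ((real DIM('a) * r)\<^sup>2) * L2_sqnorm g) * indicator (open_cube r :: 'a set) h \<partial>lborel)"
  proof (intro nn_integral_mono)
    fix h :: 'a
    have "L2_sqnorm (\<lambda>x. u (x + h) - u x) \<le> 6 * ennreal ((real DIM('a) * r)\<^sup>2) * L2_sqnorm g"
      if "h \<in> open_cube r"
    proof -
      have "L2_sqnorm (\<lambda>x. u (x + h) - u x) \<le> 6 * ennreal ((norm h)\<^sup>2) * L2_sqnorm g"
        by (rule H10_grad_translation_estimate[OF assms(1)])
      also have "\<dots> \<le> 6 * ennreal ((real DIM('a) * r)\<^sup>2) * L2_sqnorm g"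
        using norm_le_of_mem_open_cube(2)[OF that assms(2)]
        by (intro mult_right_mono mult_left_mono ennreal_leI) auto
      finally show ?thesis .
    qed
    then show "indicator (open_cube r) h * L2_sqnorm (\<lambda>x. u (x + h) - u x)
        \<le> (6 * ennreal ((real DIM('a) * r)\<^sup>2) * L2_sqnorm g) * indicator (open_cube r) h"
      by (cases "h \<in> open_cube r") (auto simp: mult.commute)
  qed
  also have "\<dots> = (6 * ennreal ((real DIM('a) * r)\<^sup>2) * L2_sqnorm g) * ennreal ((2 * r) ^ DIM('a))"
    using emeasure_open_cube[OF assms(2), where 'a='a]
    by (subst nn_integral_cmult_indicator) (auto simp: open_cube_def)
  also have "\<dots> = ennreal (6 * (real DIM('a) * r)\<^sup>2 * (2 * r) ^ DIM('a)) * L2_sqnorm g"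
    using assms(2) by (simp add: ennreal_mult mult_ac)
  finally show ?thesis unfolding F_def .
qed

lemma L2_sqnorm_sub_grid_projection_le:
  fixes u :: "'a::euclidean_space \<Rightarrow> real"
  assumes "r > 0" "H10_grad \<Omega> u g" "grid_index r ` \<Omega> \<subseteq> Ks" "open \<Omega>"
  shows "L2_sqnorm (\<lambda>x. u x - grid_projection r Ks u x)
    \<le> ennreal (2 ^ DIM('a) * 6 * (real DIM('a))\<^sup>2 * r\<^sup>2) * L2_sqnorm g"
proof -
  define n where "n = DIM('a)"
  have "AE x in lborel. ennreal ((u x - grid_projection r Ks u x)\<^sup>2) \<le>
      ennreal (1 / r ^ n) * (\<integral>\<^sup>+ h. indicator (open_cube r) h * ennreal ((u (x + h) - u x)\<^sup>2) \<partial>lborel)"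
    using H10_grad_AE_zero_outside[OF assms(2,4)]
  proof eventually_elim
    case (elim x)
    show ?case
    proof (cases "grid_index r x \<in> Ks")
      case True
      then show ?thesis unfolding n_def
        by (rule grid_projection_deviation_le[OF assms(1) H10_grad_square_integrable(1)[OF assms(2)]])
    next
      case False
      then show ?thesis using elim assms(3) by (auto simp: grid_projection_def)
    qed
  qed
  then have "L2_sqnorm (\<lambda>x. u x - grid_projection r Ks u x) \<le>
      (\<integral>\<^sup>+ x. ennreal (1 / r ^ n) * (\<integral>\<^sup>+ h. indicator (open_cube r) h * ennreal ((u (x + h) - u x)\<^sup>2) \<partial>lborel) \<partial>lborel)"
    unfolding L2_sqnorm_real by (rule nn_integral_mono_AE)
  also have "\<dots> = ennreal (1 / r ^ n) *
      (\<integral>\<^sup>+ x. (\<integral>\<^sup>+ h. indicator (open_cube r) h * ennreal ((u (x + h) - u x)\<^sup>2) \<partial>lborel) \<partial>lborel)"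
    using H10_grad_measurable[OF assms(2)] by (intro nn_integral_cmult) (simp add: open_cube_def)
  also have "\<dots> \<le> ennreal (1 / r ^ n) * (ennreal (6 * (real n * r)\<^sup>2 * (2 * r) ^ n) * L2_sqnorm g)"
    unfolding n_def by (intro mult_left_mono nn_integral_increment_open_cube_le[OF assms(2,1)]) auto
  also have "\<dots> = ennreal (1 / r ^ n * (6 * (real n * r)\<^sup>2 * (2 * r) ^ n)) * L2_sqnorm g"
    by (subst ennreal_mult) (use assms(1) in \<open>auto simp: mult.assoc\<close>)
  also have "1 / r ^ n * (6 * (real n * r)\<^sup>2 * (2 * r) ^ n) = 2 ^ n * 6 * (real n)\<^sup>2 * r\<^sup>2"
    using assms(1) by (simp add: power_mult_distrib field_simps)
  finally show ?thesis unfolding n_def .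
qed

lemma L2_sqnorm_grid_projection_diff_le:
  assumes "compact D" "\<And>x. grid_index r x \<in> Ks \<Longrightarrow> x \<in> D" "c \<ge> 0"
    and "\<And>k. k \<in> Ks \<Longrightarrow> \<bar>cell_average r u k - cell_average r v k\<bar> \<le> c"
  shows "L2_sqnorm (\<lambda>x. grid_projection r Ks u x - grid_projection r Ks v x) \<le> ennreal (c\<^sup>2) * emeasure lborel D"
proof (rule L2_sqnorm_le_indicator[OF assms(1)])
  show "norm (grid_projection r Ks u x - grid_projection r Ks v x) \<le> c * indicator D x" for x
    using assms(2)[of x] assms(3) assms(4)[of "grid_index r x"]
    by (auto simp: grid_projection_def indicator_def)
qed

lemma grid_indices_of_bounded:
  fixes \<Omega> :: "'a::euclidean_space set"
  assumes "bounded \<Omega>" "r > 0"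
  obtains Ks D where "finite Ks" "Ks \<subseteq> extensional Basis" "grid_index r ` \<Omega> \<subseteq> Ks"
    "compact D" "\<And>x. grid_index r x \<in> Ks \<Longrightarrow> x \<in> D"
proof -
  obtain R where R: "\<And>x. x \<in> \<Omega> \<Longrightarrow> norm x \<le> R" using assms(1) bounded_iff by metis
  define N :: int where "N = \<lceil>R / r\<rceil>"
  define Ks where "Ks = (\<Pi>\<^sub>E b\<in>(Basis::'a set). {-N..N})"
  define M where "M = (real_of_int N + 1) * r"
  define D :: "'a set" where "D = cbox (- (\<Sum>b\<in>Basis. M *\<^sub>R b)) (\<Sum>b\<in>Basis. M *\<^sub>R b)"
  have "grid_index r x \<in> Ks" if "x \<in> \<Omega>" for x
  proof -
    have "\<lfloor>(x \<bullet> b) / r\<rfloor> \<in> {-N..N}" if "b \<in> Basis" for b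
      unfolding N_def using Basis_le_norm[OF that, of x] R[OF \<open>x \<in> \<Omega>\<close>] assms(2)
      by (intro floor_divide_mem_bounded) auto
    then show ?thesis unfolding Ks_def grid_index_def by (simp add: restrict_PiE_iff)
  qed
  moreover have "x \<in> D" if "grid_index r x \<in> Ks" for x
  proof -
    have "\<bar>x \<bullet> b\<bar> \<le> M" if "b \<in> Basis" for b
      unfolding M_def using \<open>grid_index r x \<in> Ks\<close> that assms(2)
      by (intro abs_le_of_floor_divide_mem) (auto simp: Ks_def grid_index_def PiE_iff)
    then have "- M \<le> x \<bullet> b \<and> x \<bullet> b \<le> M" if "b \<in> Basis" for b
      using that unfolding abs_le_iff by fastforce
    moreover have "(\<Sum>b\<in>Basis. M *\<^sub>R b) \<bullet> i = M" if "i \<in> Basis" for i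
      using inner_sum_Basis_scaleR[OF that, of "\<lambda>_. M"] by simp
    ultimately show ?thesis unfolding D_def mem_box by (simp add: inner_minus_left)
  qed
  moreover have "finite Ks" "Ks \<subseteq> extensional Basis"
    unfolding Ks_def by (auto intro: finite_PiE simp: PiE_iff)
  ultimately show ?thesis using that[of Ks D] unfolding D_def by auto
qed

lemma finite_net_of_finite_quantization:
  assumes "finite (\<kappa> ` S)" "\<And>u v. u \<in> S \<Longrightarrow> v \<in> S \<Longrightarrow> \<kappa> u = \<kappa> v \<Longrightarrow> P u v"
  shows "\<exists>F. finite F \<and> F \<subseteq> S \<and> (\<forall>u\<in>S. \<exists>v\<in>F. P u v)"
proof -
  define rep where "rep c = (SOME v. v \<in> S \<and> \<kappa> v = c)" for c
  have rep: "rep (\<kappa> u) \<in> S" "\<kappa> (rep (\<kappa> u)) = \<kappa> u" if "u \<in> S" for u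
    using someI[of "\<lambda>v. v \<in> S \<and> \<kappa> v = \<kappa> u" u] that unfolding rep_def by blast+
  have "\<exists>v\<in>rep ` \<kappa> ` S. P u v" if "u \<in> S" for u
    using assms(2)[OF that rep(1)[OF that] rep(2)[OF that, symmetric]] that by blast
  moreover have "rep ` \<kappa> ` S \<subseteq> S" using rep by blast
  ultimately show ?thesis using assms(1) by blast
qed

lemma L2_sqnorm_diff_le_of_cell_averages:
  fixes u v :: "'a::euclidean_space \<Rightarrow> real"
  assumes "r > 0" "open \<Omega>" "finite Ks" "grid_index r ` \<Omega> \<subseteq> Ks"
    and "compact D" "\<And>x. grid_index r x \<in> Ks \<Longrightarrow> x \<in> D"
    and "H10_grad \<Omega> u gu" "H10_grad \<Omega> v gv" "c \<ge> 0"
    and "\<And>k. k \<in> Ks \<Longrightarrow> \<bar>cell_average r u k - cell_average r v k\<bar> \<le> c"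
  shows "L2_sqnorm (\<lambda>x. u x - v x) \<le> 3 * (ennreal (2 ^ DIM('a) * 6 * (real DIM('a))\<^sup>2 * r\<^sup>2) * L2_sqnorm gu)
      + 3 * (ennreal (c\<^sup>2) * emeasure lborel D) + 3 * (ennreal (2 ^ DIM('a) * 6 * (real DIM('a))\<^sup>2 * r\<^sup>2) * L2_sqnorm gv)"
proof -
  have "L2_sqnorm (\<lambda>x. u x - v x) \<le> 3 * L2_sqnorm (\<lambda>x. u x - grid_projection r Ks u x)
      + 3 * L2_sqnorm (\<lambda>x. grid_projection r Ks u x - grid_projection r Ks v x)
      + 3 * L2_sqnorm (\<lambda>x. v x - grid_projection r Ks v x)"
    using grid_projection_measurable[OF assms(3)] H10_grad_measurable[OF assms(7)] H10_grad_measurable[OF assms(8)]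
    by (intro L2_sqnorm_triangle3) auto
  also have "\<dots> \<le> 3 * (ennreal (2 ^ DIM('a) * 6 * (real DIM('a))\<^sup>2 * r\<^sup>2) * L2_sqnorm gu)
      + 3 * (ennreal (c\<^sup>2) * emeasure lborel D) + 3 * (ennreal (2 ^ DIM('a) * 6 * (real DIM('a))\<^sup>2 * r\<^sup>2) * L2_sqnorm gv)"
    by (intro add_mono mult_left_mono L2_sqnorm_sub_grid_projection_le[OF assms(1) _ assms(4,2)] assms(7,8)
        L2_sqnorm_grid_projection_diff_le[OF assms(5,6,9,10)] order_refl) auto
  finally show ?thesis .
qed

lemma finite_cell_average_quantization:
  fixes S :: "('a::euclidean_space \<Rightarrow> real) set"
  assumes "r > 0" "c > 0" "finite Ks" "Ks \<subseteq> extensional Basis"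
    and "\<And>u. u \<in> S \<Longrightarrow> square_integrable u \<and> L2_sqnorm u \<le> 1"
  shows "finite ((\<lambda>u. restrict (\<lambda>k. \<lfloor>cell_average r u k / c\<rfloor>) Ks) ` S)"
proof -
  define B where "B = sqrt (r ^ DIM('a)) / r ^ DIM('a)"
  have "restrict (\<lambda>k. \<lfloor>cell_average r u k / c\<rfloor>) Ks \<in> (\<Pi>\<^sub>E k\<in>Ks. {-\<lceil>B / c\<rceil>..\<lceil>B / c\<rceil>})"
    if u: "u \<in> S" for u
  proof -
    have "\<bar>cell_average r u k\<bar> \<le> B" if "k \<in> Ks" for k
      unfolding B_def using assms(1,4) assms(5)[OF u] that by (intro cell_average_abs_le) auto
    then show ?thesis using assms(2)
      by (simp add: restrict_PiE_iff Pi_iff floor_divide_mem_bounded del: atLeastAtMost_iff)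
  qed
  then have "(\<lambda>u. restrict (\<lambda>k. \<lfloor>cell_average r u k / c\<rfloor>) Ks) ` S \<subseteq> (\<Pi>\<^sub>E k\<in>Ks. {-\<lceil>B / c\<rceil>..\<lceil>B / c\<rceil>})"
    by blast
  then show ?thesis by (rule finite_subset) (intro finite_PiE assms(3) finite_atLeastAtMost_int)
qed

text \<open>Rellich's theorem. The net is found by quantising the averages of \<open>u\<close> over the finitely many
  grid cells meeting \<open>\<Omega>\<close>.\<close>
lemma H10_grad_bounded_finite_L2_net:
  fixes \<Omega> :: "'a::euclidean_space set" and S :: "('a \<Rightarrow> real) set"
  assumes "bounded \<Omega>" "open \<Omega>" "\<Lambda> \<ge> 0" "\<eta> > 0"
    and "\<And>u. u \<in> S \<Longrightarrow> \<exists>g. H10_grad \<Omega> u g \<and> L2_sqnorm g \<le> ennreal \<Lambda>"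
    and "\<And>u. u \<in> S \<Longrightarrow> L2_sqnorm u \<le> 1"
  shows "\<exists>F. finite F \<and> F \<subseteq> S \<and> (\<forall>u\<in>S. \<exists>v\<in>F. L2_sqnorm (\<lambda>x. u x - v x) \<le> ennreal \<eta>)"
proof -
  define C where "C = 2 ^ DIM('a) * 6 * (real DIM('a))\<^sup>2"
  obtain r where r: "r > 0" "r\<^sup>2 * (C * \<Lambda>) \<le> \<eta> / 9"
    using obtain_pos_square_mult_le[of "C * \<Lambda>" "\<eta> / 9"] assms(3,4) by (auto simp: C_def)
  obtain Ks D where Ks: "finite Ks" "Ks \<subseteq> extensional Basis" "grid_index r ` \<Omega> \<subseteq> Ks"
    and D: "compact D" "\<And>x. grid_index r x \<in> Ks \<Longrightarrow> x \<in> D"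
    using grid_indices_of_bounded[OF assms(1) r(1)] by blast
  define mD where "mD = enn2real (emeasure lborel D)"
  have mD: "emeasure lborel D = ennreal mD" "mD \<ge> 0"
    using emeasure_lborel_compact_finite[OF D(1)] unfolding mD_def by (auto simp: less_top ennreal_enn2real_if)
  obtain c where c: "c > 0" "c\<^sup>2 * mD \<le> \<eta> / 9"
    using obtain_pos_square_mult_le[OF mD(2), of "\<eta> / 9"] assms(4) by auto
  have proj: "ennreal (C * r\<^sup>2) * L2_sqnorm g \<le> ennreal (\<eta> / 9)" if "L2_sqnorm g \<le> ennreal \<Lambda>" for g
  proof -
    have "ennreal (C * r\<^sup>2) * L2_sqnorm g \<le> ennreal (C * r\<^sup>2) * ennreal \<Lambda>" by (intro mult_left_mono that) auto
    also have "\<dots> \<le> ennreal (\<eta> / 9)" using r(2) assms(3) by (simp add: ennreal_mult[symmetric] C_def mult_ac ennreal_leI)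
    finally show ?thesis .
  qed
  have cube: "ennreal (c\<^sup>2) * emeasure lborel D \<le> ennreal (\<eta> / 9)"
    using mD c(2) by (simp add: ennreal_mult[symmetric] ennreal_leI)
  have "finite ((\<lambda>u. restrict (\<lambda>k. \<lfloor>cell_average r u k / c\<rfloor>) Ks) ` S)"
    using r(1) c(1) Ks(1,2) assms(5,6) H10_grad_square_integrable by (intro finite_cell_average_quantization) blast+
  then show ?thesis
  proof (rule finite_net_of_finite_quantization)
    fix u v assume u: "u \<in> S" and v: "v \<in> S"
      and uv: "restrict (\<lambda>k. \<lfloor>cell_average r u k / c\<rfloor>) Ks = restrict (\<lambda>k. \<lfloor>cell_average r v k / c\<rfloor>) Ks"
    obtain gu where gu: "H10_grad \<Omega> u gu" "L2_sqnorm gu \<le> ennreal \<Lambda>" using assms(5)[OF u] by blast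
    obtain gv where gv: "H10_grad \<Omega> v gv" "L2_sqnorm gv \<le> ennreal \<Lambda>" using assms(5)[OF v] by blast
    have "\<bar>cell_average r u k - cell_average r v k\<bar> \<le> c" if "k \<in> Ks" for k
    proof -
      have "\<lfloor>cell_average r u k / c\<rfloor> = \<lfloor>cell_average r v k / c\<rfloor>"
        using uv that by (metis restrict_apply')
      then show ?thesis using c(1) by (intro less_imp_le floor_divide_eq_imp_abs_diff_less)
    qed
    then have "L2_sqnorm (\<lambda>x. u x - v x) \<le> 3 * (ennreal (C * r\<^sup>2) * L2_sqnorm gu)
        + 3 * (ennreal (c\<^sup>2) * emeasure lborel D) + 3 * (ennreal (C * r\<^sup>2) * L2_sqnorm gv)"
      unfolding C_def using c(1)
      by (intro L2_sqnorm_diff_le_of_cell_averages[OF r(1) assms(2) Ks(1,3) D gu(1) gv(1)]) auto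
    also have "\<dots> \<le> 3 * ennreal (\<eta> / 9) + 3 * ennreal (\<eta> / 9) + 3 * ennreal (\<eta> / 9)"
      by (intro add_mono mult_left_mono proj[OF gu(2)] proj[OF gv(2)] cube) auto
    also have "\<dots> = ennreal (3 * (\<eta> / 9) + 3 * (\<eta> / 9) + 3 * (\<eta> / 9))"
      using assms(4) by (intro ennreal_numeral_mult_add3) auto
    also have "\<dots> = ennreal \<eta>" by simp
    finally show "L2_sqnorm (\<lambda>x. u x - v x) \<le> ennreal \<eta>" .
  qed
qed

section \<open>Sets of zero capacity\<close>

lemma cap_less_obtain:
  assumes "cap \<Omega> K < ennreal \<epsilon>"
  obtains f \<eta> G\<eta> V where "f \<in> H10 \<Omega>" "dir_energy \<Omega> f < ennreal \<epsilon>" "cc1_fun \<Omega> \<eta> G\<eta>"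
    "open V" "K \<subseteq> V" "\<And>x. x \<in> V \<Longrightarrow> \<eta> x = 1" "(\<lambda>x. f x - \<eta> x) \<in> H10 (\<Omega> - K)"
proof -
  obtain e where "e \<in> {dir_energy \<Omega> f | f. f \<in> H10 \<Omega> \<and>
      (\<exists>\<eta> G V. cc1_fun \<Omega> \<eta> G \<and> open V \<and> K \<subseteq> V \<and> (\<forall>x\<in>V. \<eta> x = 1) \<and>
               (\<lambda>x. f x - \<eta> x) \<in> H10 (\<Omega> - K))}" "e < ennreal \<epsilon>"
    using assms unfolding cap_def by (auto simp: Inf_less_iff)
  then show ?thesis using that by blast
qed

text \<open>By Poincare, a small energy also makes the \<open>L\<^sup>2\<close> norm of the capacitary function small.\<close>
lemma cap_zero_obtain_small:
  fixes \<Omega> K :: "'a::euclidean_space set"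
  assumes "bounded \<Omega>" "cap \<Omega> K = 0" "\<epsilon> > 0"
  obtains f gf \<eta> G\<eta> V where "H10_grad \<Omega> f gf" "L2_sqnorm f \<le> ennreal \<epsilon>" "L2_sqnorm gf \<le> ennreal \<epsilon>"
    "cc1_fun \<Omega> \<eta> G\<eta>" "open V" "K \<subseteq> V" "\<And>x. x \<in> V \<Longrightarrow> \<eta> x = 1"
    "H10_grad (\<Omega> - K) (\<lambda>x. f x - \<eta> x) (\<lambda>x. gf x - G\<eta> x)"
proof -
  obtain c where c: "c \<ge> 0" "\<And>f g. H10_grad \<Omega> f g \<Longrightarrow> L2_sqnorm f \<le> ennreal c * L2_sqnorm g"
    using poincare_H10_grad[OF assms(1)] by blast
  obtain \<epsilon>\<^sub>0 where \<epsilon>\<^sub>0: "\<epsilon>\<^sub>0 > 0" "(c + 1) * \<epsilon>\<^sub>0 \<le> \<epsilon>"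
    using obtain_pos_mult_le[of "c + 1" \<epsilon>] c(1) assms(3) by auto
  have "c * \<epsilon>\<^sub>0 \<ge> 0" using c(1) \<epsilon>\<^sub>0(1) by simp
  then have \<epsilon>\<^sub>0_le: "\<epsilon>\<^sub>0 \<le> \<epsilon>" "c * \<epsilon>\<^sub>0 \<le> \<epsilon>" using \<epsilon>\<^sub>0 by (simp_all add: algebra_simps)
  have "cap \<Omega> K < ennreal \<epsilon>\<^sub>0" using assms(2) \<epsilon>\<^sub>0(1) by simp
  then obtain f \<eta> G\<eta> V where f: "f \<in> H10 \<Omega>" "dir_energy \<Omega> f < ennreal \<epsilon>\<^sub>0" "cc1_fun \<Omega> \<eta> G\<eta>"
    "open V" "K \<subseteq> V" "\<And>x. x \<in> V \<Longrightarrow> \<eta> x = 1" "(\<lambda>x. f x - \<eta> x) \<in> H10 (\<Omega> - K)"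
    using cap_less_obtain by blast
  obtain gf where gf: "H10_grad \<Omega> f gf" using f(1) unfolding H10_def by blast
  obtain h where h: "H10_grad (\<Omega> - K) (\<lambda>x. f x - \<eta> x) h" using f(7) unfolding H10_def by blast
  have "AE x in lborel. h x = gf x - G\<eta> x"
    by (rule H10_grad_unique[OF H10_grad_mono[OF h] H10_grad_diff[OF gf H10_grad_cc1_fun[OF f(3)]]]) auto
  then have grad: "H10_grad (\<Omega> - K) (\<lambda>x. f x - \<eta> x) (\<lambda>x. gf x - G\<eta> x)"
    using H10_grad_gradient_measurable[OF gf] cc1_fun_gradient_measurable[OF f(3)]
    by (intro H10_grad_AE_cong[OF h]) auto
  have small_gf: "L2_sqnorm gf \<le> ennreal \<epsilon>\<^sub>0"
    using f(2) dir_energy_eq_L2_sqnorm[OF gf] by simp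
  have "L2_sqnorm f \<le> ennreal c * ennreal \<epsilon>\<^sub>0"
    using order_trans[OF c(2)[OF gf] mult_left_mono[OF small_gf]] by simp
  also have "\<dots> \<le> ennreal \<epsilon>" using c(1) \<epsilon>\<^sub>0 \<epsilon>\<^sub>0_le by (simp add: ennreal_mult[symmetric] ennreal_leI)
  finally show ?thesis
    using order_trans[OF small_gf ennreal_leI[OF \<epsilon>\<^sub>0_le(1)]] by (rule that[OF gf _ _ f(3-6) grad])
qed

text \<open>Approximating \<open>f - \<eta>\<close> by a test function \<open>\<zeta>\<close> on \<open>\<Omega> \<setminus> K\<close> gives the cutoff \<open>\<eta> + \<zeta>\<close>,
  which is \<open>1\<close> near \<open>K\<close> because \<open>\<zeta>\<close> vanishes there, and close to \<open>f\<close>.\<close>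
lemma cap_zero_small_cutoff:
  fixes \<Omega> K :: "'a::euclidean_space set"
  assumes "bounded \<Omega>" "cap \<Omega> K = 0" "\<epsilon> > 0"
  obtains \<theta> G\<theta> W where "cc1_fun \<Omega> \<theta> G\<theta>" "open W" "K \<subseteq> W" "\<And>x. x \<in> W \<Longrightarrow> \<theta> x = 1"
    "L2_sqnorm \<theta> \<le> ennreal \<epsilon>" "L2_sqnorm G\<theta> \<le> ennreal \<epsilon>"
proof -
  have \<epsilon>4: "\<epsilon> / 4 > 0" using assms(3) by simp
  obtain f gf \<eta> G\<eta> V where f: "H10_grad \<Omega> f gf" "L2_sqnorm f \<le> ennreal (\<epsilon> / 4)"
    "L2_sqnorm gf \<le> ennreal (\<epsilon> / 4)" "cc1_fun \<Omega> \<eta> G\<eta>" "open V" "K \<subseteq> V" "\<And>x. x \<in> V \<Longrightarrow> \<eta> x = 1"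
    "H10_grad (\<Omega> - K) (\<lambda>x. f x - \<eta> x) (\<lambda>x. gf x - G\<eta> x)"
    using cap_zero_obtain_small[OF assms(1,2) \<epsilon>4] by blast
  obtain \<zeta> G\<zeta> where \<zeta>: "cc1_fun (\<Omega> - K) \<zeta> G\<zeta>" "L2_sqnorm (\<lambda>x. (f x - \<eta> x) - \<zeta> x) < ennreal (\<epsilon> / 4)"
    "L2_sqnorm (\<lambda>x. (gf x - G\<eta> x) - G\<zeta> x) < ennreal (\<epsilon> / 4)"
    using H10_grad_obtain_close[OF f(8) \<epsilon>4] by blast
  obtain C where C: "compact C" "C \<subseteq> \<Omega> - K" "\<And>x. x \<notin> C \<Longrightarrow> \<zeta> x = 0" "\<And>x. x \<notin> C \<Longrightarrow> G\<zeta> x = 0"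
    using cc1_fun_support[OF \<zeta>(1)] by blast
  have m: "f \<in> borel_measurable borel" "gf \<in> borel_measurable borel"
    "\<eta> \<in> borel_measurable borel" "G\<eta> \<in> borel_measurable borel"
    "\<zeta> \<in> borel_measurable borel" "G\<zeta> \<in> borel_measurable borel"
    using H10_grad_measurable[OF f(1)] H10_grad_gradient_measurable[OF f(1)]
      cc1_fun_measurable[OF f(4)] cc1_fun_gradient_measurable[OF f(4)]
      cc1_fun_measurable[OF \<zeta>(1)] cc1_fun_gradient_measurable[OF \<zeta>(1)] by auto
  have quarter: "2 * ennreal (\<epsilon> / 4) + 2 * ennreal (\<epsilon> / 4) = ennreal \<epsilon>"
    using ennreal_numeral_mult_add[of "\<epsilon> / 4" "\<epsilon> / 4" "num.Bit0 num.One" "num.Bit0 num.One"] assms(3) by simp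
  show ?thesis
  proof (rule that[of "\<lambda>x. \<eta> x + \<zeta> x" "\<lambda>x. G\<eta> x + G\<zeta> x" "V - C"])
    show "cc1_fun \<Omega> (\<lambda>x. \<eta> x + \<zeta> x) (\<lambda>x. G\<eta> x + G\<zeta> x)"
      by (rule cc1_fun_add[OF f(4) cc1_fun_mono[OF \<zeta>(1)]]) auto
    show "open (V - C)" using f(5) C(1) by (simp add: open_Diff compact_imp_closed)
    show "K \<subseteq> V - C" using f(6) C(2) by blast
    show "\<eta> x + \<zeta> x = 1" if "x \<in> V - C" for x using that f(7) C(3) by simp
    have "norm (\<eta> x + \<zeta> x) \<le> norm (f x) + norm ((f x - \<eta> x) - \<zeta> x)" for x
      using norm_triangle_ineq4[of "f x" "(f x - \<eta> x) - \<zeta> x"] by (simp add: algebra_simps)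
    then have "L2_sqnorm (\<lambda>x. \<eta> x + \<zeta> x) \<le> 2 * L2_sqnorm f + 2 * L2_sqnorm (\<lambda>x. (f x - \<eta> x) - \<zeta> x)"
      by (intro L2_sqnorm_triangle) (use m in auto)
    also have "\<dots> \<le> 2 * ennreal (\<epsilon> / 4) + 2 * ennreal (\<epsilon> / 4)"
      using f(2) \<zeta>(2) by (intro add_mono mult_left_mono) auto
    finally show "L2_sqnorm (\<lambda>x. \<eta> x + \<zeta> x) \<le> ennreal \<epsilon>" unfolding quarter .
    have "norm (G\<eta> x + G\<zeta> x) \<le> norm (gf x) + norm ((gf x - G\<eta> x) - G\<zeta> x)" for x
      using norm_triangle_ineq4[of "gf x" "(gf x - G\<eta> x) - G\<zeta> x"] by (simp add: algebra_simps)
    then have "L2_sqnorm (\<lambda>x. G\<eta> x + G\<zeta> x) \<le> 2 * L2_sqnorm gf + 2 * L2_sqnorm (\<lambda>x. (gf x - G\<eta> x) - G\<zeta> x)"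
      by (intro L2_sqnorm_triangle) (use m in auto)
    also have "\<dots> \<le> 2 * ennreal (\<epsilon> / 4) + 2 * ennreal (\<epsilon> / 4)"
      using f(3) \<zeta>(3) by (intro add_mono mult_left_mono) auto
    finally show "L2_sqnorm (\<lambda>x. G\<eta> x + G\<zeta> x) \<le> ennreal \<epsilon>" unfolding quarter .
  qed
qed

lemma L2_sqnorm_product_rule_le:
  assumes "cc1_fun U \<theta> G\<theta>" "\<And>x. \<bar>\<phi> x\<bar> \<le> M" "\<And>x. norm (G\<phi> x) \<le> M" "M \<ge> 0"
  shows "L2_sqnorm (\<lambda>x. \<theta> x *\<^sub>R G\<phi> x + \<phi> x *\<^sub>R G\<theta> x)
    \<le> 2 * (ennreal (M\<^sup>2) * L2_sqnorm \<theta>) + 2 * (ennreal (M\<^sup>2) * L2_sqnorm G\<theta>)"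
proof -
  have "norm (\<theta> x *\<^sub>R G\<phi> x + \<phi> x *\<^sub>R G\<theta> x) \<le> norm (M * \<theta> x) + norm (M *\<^sub>R G\<theta> x)" for x
  proof -
    have "\<bar>\<theta> x\<bar> * norm (G\<phi> x) \<le> \<bar>\<theta> x\<bar> * M" by (intro mult_left_mono assms(3)) auto
    moreover have "\<bar>\<phi> x\<bar> * norm (G\<theta> x) \<le> M * norm (G\<theta> x)" by (intro mult_right_mono assms(2)) auto
    ultimately show ?thesis
      using norm_triangle_ineq[of "\<theta> x *\<^sub>R G\<phi> x" "\<phi> x *\<^sub>R G\<theta> x"] assms(4) by (simp add: abs_mult mult.commute)
  qed
  then have "L2_sqnorm (\<lambda>x. \<theta> x *\<^sub>R G\<phi> x + \<phi> x *\<^sub>R G\<theta> x)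
      \<le> 2 * L2_sqnorm (\<lambda>x. M * \<theta> x) + 2 * L2_sqnorm (\<lambda>x. M *\<^sub>R G\<theta> x)"
    using cc1_fun_measurable[OF assms(1)] cc1_fun_gradient_measurable[OF assms(1)]
    by (intro L2_sqnorm_triangle) auto
  also have "L2_sqnorm (\<lambda>x. M * \<theta> x) \<le> ennreal (M\<^sup>2) * L2_sqnorm \<theta>"
    using assms(4) cc1_fun_measurable[OF assms(1)] by (intro L2_sqnorm_le_scaled) (auto simp: abs_mult)
  also have "L2_sqnorm (\<lambda>x. M *\<^sub>R G\<theta> x) \<le> ennreal (M\<^sup>2) * L2_sqnorm G\<theta>"
    using assms(4) cc1_fun_gradient_measurable[OF assms(1)] by (intro L2_sqnorm_le_scaled) auto
  finally show ?thesis by (simp add: mult_left_mono add_mono)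
qed

text \<open>Multiplying by \<open>1 - \<theta>\<close> for a small cutoff \<open>\<theta>\<close> moves a test function away from \<open>K\<close>.\<close>
lemma cap_zero_cc1_fun_approx:
  fixes \<Omega> K :: "'a::euclidean_space set"
  assumes "bounded \<Omega>" "cap \<Omega> K = 0" "cc1_fun \<Omega> \<phi> G\<phi>" "\<delta> > 0"
  obtains w Gw where "cc1_fun (\<Omega> - K) w Gw" "L2_sqnorm (\<lambda>x. G\<phi> x - Gw x) \<le> ennreal \<delta>"
proof -
  obtain M where M: "M > 0" "\<And>x. \<bar>\<phi> x\<bar> \<le> M" "\<And>x. norm (G\<phi> x) \<le> M"
    using cc1_fun_bounded[OF assms(3)] by blast
  have "\<delta> / (4 * M\<^sup>2) > 0" using assms(4) M(1) by simp
  then obtain \<theta> G\<theta> W where \<theta>: "cc1_fun \<Omega> \<theta> G\<theta>" "open W" "K \<subseteq> W" "\<And>x. x \<in> W \<Longrightarrow> \<theta> x = 1"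
    "L2_sqnorm \<theta> \<le> ennreal (\<delta> / (4 * M\<^sup>2))" "L2_sqnorm G\<theta> \<le> ennreal (\<delta> / (4 * M\<^sup>2))"
    using cap_zero_small_cutoff[OF assms(1,2)] by blast
  have "((\<lambda>x. 1 - \<theta> x) has_derivative (\<lambda>h. (- G\<theta> x) \<bullet> h)) (at x)" for x
    using has_derivative_diff[OF has_derivative_const cc1_fun_has_derivative[OF \<theta>(1)], of 1 x] by simp
  then have "cc1_fun (\<Omega> - W) (\<lambda>x. \<phi> x * (1 - \<theta> x)) (\<lambda>x. (1 - \<theta> x) *\<^sub>R G\<phi> x + \<phi> x *\<^sub>R - G\<theta> x)"
    using cc1_fun_gradient_continuous[OF \<theta>(1)] \<theta>(4)
    by (intro cc1_fun_mult_vanishing[OF assms(3) _ _ \<theta>(2)]) (auto intro: continuous_intros)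
  then have "cc1_fun (\<Omega> - K) (\<lambda>x. \<phi> x * (1 - \<theta> x)) (\<lambda>x. (1 - \<theta> x) *\<^sub>R G\<phi> x + \<phi> x *\<^sub>R - G\<theta> x)"
    by (rule cc1_fun_mono) (use \<theta>(3) in blast)
  moreover have "L2_sqnorm (\<lambda>x. G\<phi> x - ((1 - \<theta> x) *\<^sub>R G\<phi> x + \<phi> x *\<^sub>R - G\<theta> x)) \<le> ennreal \<delta>"
  proof -
    have "L2_sqnorm (\<lambda>x. G\<phi> x - ((1 - \<theta> x) *\<^sub>R G\<phi> x + \<phi> x *\<^sub>R - G\<theta> x))
        = L2_sqnorm (\<lambda>x. \<theta> x *\<^sub>R G\<phi> x + \<phi> x *\<^sub>R G\<theta> x)"
      by (simp add: algebra_simps)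
    also have "\<dots> \<le> 2 * (ennreal (M\<^sup>2) * L2_sqnorm \<theta>) + 2 * (ennreal (M\<^sup>2) * L2_sqnorm G\<theta>)"
      using M by (intro L2_sqnorm_product_rule_le[OF \<theta>(1)]) auto
    also have "\<dots> \<le> 2 * (ennreal (M\<^sup>2) * ennreal (\<delta> / (4 * M\<^sup>2))) + 2 * (ennreal (M\<^sup>2) * ennreal (\<delta> / (4 * M\<^sup>2)))"
      by (intro add_mono mult_left_mono \<theta>(5,6)) auto
    also have "\<dots> = ennreal \<delta>"
      using M(1) assms(4) by (simp add: ennreal_mult[symmetric] ennreal_numeral_mult_add)
    finally show ?thesis .
  qed
  ultimately show ?thesis using that by blast
qed

lemma cap_zero_H10_grad_approx:
  fixes \<Omega> K :: "'a::euclidean_space set"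
  assumes "bounded \<Omega>" "cap \<Omega> K = 0" "H10_grad \<Omega> u g" "\<delta> > 0"
  obtains w Gw where "cc1_fun (\<Omega> - K) w Gw" "L2_sqnorm (\<lambda>x. g x - Gw x) \<le> ennreal \<delta>"
proof -
  have \<delta>4: "\<delta> / 4 > 0" using assms(4) by simp
  obtain \<phi> G where \<phi>: "cc1_fun \<Omega> \<phi> G" "L2_sqnorm (\<lambda>x. u x - \<phi> x) < ennreal (\<delta> / 4)"
    "L2_sqnorm (\<lambda>x. g x - G x) < ennreal (\<delta> / 4)"
    using H10_grad_obtain_close[OF assms(3) \<delta>4] by blast
  obtain w Gw where w: "cc1_fun (\<Omega> - K) w Gw" "L2_sqnorm (\<lambda>x. G x - Gw x) \<le> ennreal (\<delta> / 4)"
    using cap_zero_cc1_fun_approx[OF assms(1,2) \<phi>(1) \<delta>4] by blast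
  have "L2_sqnorm (\<lambda>x. g x - Gw x) \<le> 2 * L2_sqnorm (\<lambda>x. g x - G x) + 2 * L2_sqnorm (\<lambda>x. G x - Gw x)"
    using H10_grad_gradient_measurable[OF assms(3)] cc1_fun_gradient_measurable[OF \<phi>(1)]
      cc1_fun_gradient_measurable[OF w(1)]
    by (intro L2_sqnorm_triangle) (auto intro: order_trans[OF _ norm_triangle_ineq] simp: algebra_simps)
  also have "\<dots> \<le> 2 * ennreal (\<delta> / 4) + 2 * ennreal (\<delta> / 4)"
    using \<phi>(3) w(2) by (intro add_mono mult_left_mono) auto
  also have "\<dots> \<le> ennreal \<delta>"
    using ennreal_numeral_mult_add[of "\<delta> / 4" "\<delta> / 4" "num.Bit0 num.One" "num.Bit0 num.One"] assms(4) by simp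
  finally show ?thesis using that w(1) by blast
qed

section \<open>Dirichlet eigenfunctions\<close>

definition dirichlet_eigenfunction :: "'a::euclidean_space set \<Rightarrow> real \<Rightarrow> ('a \<Rightarrow> real) \<Rightarrow> ('a \<Rightarrow> 'a) \<Rightarrow> bool" where
  "dirichlet_eigenfunction \<Omega> lam u g \<longleftrightarrow> H10_grad \<Omega> u g \<and>
     (\<forall>v h. H10_grad \<Omega> v h \<longrightarrow> (\<integral>x. g x \<bullet> h x \<partial>lborel) = lam * (\<integral>x. u x * v x \<partial>lborel))"

lemma mem_dirichlet_eigenspace_iff:
  "u \<in> dirichlet_eigenspace \<Omega> lam \<longleftrightarrow> (\<exists>g. dirichlet_eigenfunction \<Omega> lam u g)"
  unfolding dirichlet_eigenspace_def dirichlet_eigenfunction_def by blast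

lemma dirichlet_eigenfunction_energy:
  assumes "dirichlet_eigenfunction \<Omega> lam u g" "L2_sqnorm u = 1"
  shows "L2_sqnorm g = ennreal lam" "lam \<ge> 0"
proof -
  have g: "H10_grad \<Omega> u g" using assms(1) unfolding dirichlet_eigenfunction_def by blast
  note L = H10_grad_square_integrable[OF g]
  have rel: "(\<integral>x. g x \<bullet> g x \<partial>lborel) = lam * (\<integral>x. u x * u x \<partial>lborel)"
    using assms(1) g unfolding dirichlet_eigenfunction_def by blast
  have uu: "(\<integral>x. u x * u x \<partial>lborel) = 1"
    using L2_sqnorm_eq_integral[OF L(1)] assms(2) by simp
  have "(\<integral>x. g x \<bullet> g x \<partial>lborel) \<ge> 0" by (intro integral_nonneg_AE) auto
  then show "L2_sqnorm g = ennreal lam" "lam \<ge> 0"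
    using L2_sqnorm_eq_integral[OF L(2)] rel uu by simp_all
qed

lemma dirichlet_eigenfunction_energy_diff:
  assumes "dirichlet_eigenfunction \<Omega> lam u gu" "dirichlet_eigenfunction \<Omega> lam v gv" "lam \<ge> 0"
  shows "L2_sqnorm (\<lambda>x. gu x - gv x) = ennreal lam * L2_sqnorm (\<lambda>x. u x - v x)"
proof -
  have hu: "H10_grad \<Omega> u gu" and hv: "H10_grad \<Omega> v gv"
    using assms unfolding dirichlet_eigenfunction_def by blast+
  have hd: "H10_grad \<Omega> (\<lambda>x. u x - v x) (\<lambda>x. gu x - gv x)" by (rule H10_grad_diff[OF hu hv])
  note Ld = H10_grad_square_integrable[OF hd]
    and Lu = H10_grad_square_integrable[OF hu] and Lv = H10_grad_square_integrable[OF hv]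
  have "(\<integral>x. gu x \<bullet> (gu x - gv x) \<partial>lborel) = lam * (\<integral>x. u x * (u x - v x) \<partial>lborel)"
    "(\<integral>x. gv x \<bullet> (gu x - gv x) \<partial>lborel) = lam * (\<integral>x. v x * (u x - v x) \<partial>lborel)"
    using assms(1,2) hd unfolding dirichlet_eigenfunction_def by blast+
  moreover have "(\<integral>x. (gu x - gv x) \<bullet> (gu x - gv x) \<partial>lborel) =
      (\<integral>x. gu x \<bullet> (gu x - gv x) \<partial>lborel) - (\<integral>x. gv x \<bullet> (gu x - gv x) \<partial>lborel)"
    using integrable_inner_square_integrable[OF Lu(2) Ld(2)] integrable_inner_square_integrable[OF Lv(2) Ld(2)]
    by (simp add: inner_diff_left)
  moreover have "(\<integral>x. (u x - v x) \<bullet> (u x - v x) \<partial>lborel) =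
      (\<integral>x. u x * (u x - v x) \<partial>lborel) - (\<integral>x. v x * (u x - v x) \<partial>lborel)"
    using integrable_mult_square_integrable[OF Lu(1) Ld(1)] integrable_mult_square_integrable[OF Lv(1) Ld(1)]
    by (simp add: left_diff_distrib)
  ultimately have "(\<integral>x. (gu x - gv x) \<bullet> (gu x - gv x) \<partial>lborel) = lam * (\<integral>x. (u x - v x) \<bullet> (u x - v x) \<partial>lborel)"
    by (simp add: right_diff_distrib)
  moreover have "(\<integral>x. (u x - v x) \<bullet> (u x - v x) \<partial>lborel) \<ge> 0" by (intro integral_nonneg_AE) auto
  ultimately show ?thesis
    unfolding L2_sqnorm_eq_integral[OF Ld(2)] L2_sqnorm_eq_integral[OF Ld(1)] using assms(3)
    by (simp add: ennreal_mult)
qed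

text \<open>By Rellich, the unit sphere of the eigenspace is totally bounded in \<open>L\<^sup>2\<close>; on the eigenspace
  the energy distance is \<open>\<lambda>\<close> times the \<open>L\<^sup>2\<close> distance, so it is totally bounded in energy as well.\<close>
lemma dirichlet_eigenfunctions_finite_energy_net:
  fixes \<Omega> :: "'a::euclidean_space set" and lam :: real
  defines "S \<equiv> {u. u \<in> dirichlet_eigenspace \<Omega> lam \<and> (\<integral>\<^sup>+ x. ennreal ((u x)\<^sup>2) \<partial>lborel) = 1}"
  assumes "bounded \<Omega>" "open \<Omega>" "\<delta> > 0"
  shows "\<exists>F. finite F \<and> F \<subseteq> S \<and> (\<forall>u\<in>S. \<exists>v\<in>F. \<forall>gu gv. dirichlet_eigenfunction \<Omega> lam u gu \<longrightarrow>
    dirichlet_eigenfunction \<Omega> lam v gv \<longrightarrow> L2_sqnorm (\<lambda>x. gu x - gv x) \<le> ennreal \<delta>)"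
proof (cases "S = {}")
  case False
  have S: "L2_sqnorm u = 1" "\<exists>g. dirichlet_eigenfunction \<Omega> lam u g" if "u \<in> S" for u
    using that unfolding S_def mem_dirichlet_eigenspace_iff L2_sqnorm_real by auto
  obtain u\<^sub>0 g\<^sub>0 where "u\<^sub>0 \<in> S" "dirichlet_eigenfunction \<Omega> lam u\<^sub>0 g\<^sub>0" using False S by blast
  then have lam: "lam \<ge> 0" using dirichlet_eigenfunction_energy(2) S(1) by blast
  obtain \<eta> where \<eta>: "\<eta> > 0" "lam * \<eta> \<le> \<delta>" using obtain_pos_mult_le[OF lam assms(4)] by blast
  have "\<exists>F. finite F \<and> F \<subseteq> S \<and> (\<forall>u\<in>S. \<exists>v\<in>F. L2_sqnorm (\<lambda>x. u x - v x) \<le> ennreal \<eta>)"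
  proof (rule H10_grad_bounded_finite_L2_net[OF assms(2,3) lam \<eta>(1)])
    fix u assume u: "u \<in> S"
    then obtain g where g: "dirichlet_eigenfunction \<Omega> lam u g" using S by blast
    then show "\<exists>g. H10_grad \<Omega> u g \<and> L2_sqnorm g \<le> ennreal lam"
      using dirichlet_eigenfunction_energy(1)[OF g S(1)[OF u]] unfolding dirichlet_eigenfunction_def by auto
    show "L2_sqnorm u \<le> 1" using S(1)[OF u] by simp
  qed
  then obtain F where F: "finite F" "F \<subseteq> S" "\<And>u. u \<in> S \<Longrightarrow> \<exists>v\<in>F. L2_sqnorm (\<lambda>x. u x - v x) \<le> ennreal \<eta>"
    by blast
  have close: "L2_sqnorm (\<lambda>x. gu x - gv x) \<le> ennreal \<delta>"
    if "L2_sqnorm (\<lambda>x. u x - v x) \<le> ennreal \<eta>"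
      "dirichlet_eigenfunction \<Omega> lam u gu" "dirichlet_eigenfunction \<Omega> lam v gv" for u v gu gv
  proof -
    have "L2_sqnorm (\<lambda>x. gu x - gv x) = ennreal lam * L2_sqnorm (\<lambda>x. u x - v x)"
      by (rule dirichlet_eigenfunction_energy_diff[OF that(2,3) lam])
    also have "\<dots> \<le> ennreal lam * ennreal \<eta>" by (intro mult_left_mono that(1)) auto
    also have "\<dots> \<le> ennreal \<delta>" using \<eta> lam by (simp add: ennreal_mult[symmetric] ennreal_leI)
    finally show ?thesis .
  qed
  have "\<exists>v\<in>F. \<forall>gu gv. dirichlet_eigenfunction \<Omega> lam u gu \<longrightarrow> dirichlet_eigenfunction \<Omega> lam v gv \<longrightarrow>
      L2_sqnorm (\<lambda>x. gu x - gv x) \<le> ennreal \<delta>" if u: "u \<in> S" for u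
  proof -
    obtain v where v: "v \<in> F" "L2_sqnorm (\<lambda>x. u x - v x) \<le> ennreal \<eta>" using F(3)[OF u] by blast
    show ?thesis using close[OF v(2)] v(1) by blast
  qed
  with F(1,2) show ?thesis by blast
qed auto

section \<open>Capacity of the shrinking sets\<close>

lemma cap_u_le_L2_sqnorm:
  assumes "H10_grad \<Omega> u g" "cc1_fun (\<Omega> - L) w Gw"
  shows "cap_u \<Omega> L u \<le> L2_sqnorm (\<lambda>x. g x - Gw x)"
proof -
  have w: "H10_grad \<Omega> w Gw" by (rule H10_grad_cc1_fun[OF cc1_fun_mono[OF assms(2)]]) auto
  have f: "H10_grad \<Omega> (\<lambda>x. u x - w x) (\<lambda>x. g x - Gw x)" by (rule H10_grad_diff[OF assms(1) w])
  have "H10_grad (\<Omega> - L) (\<lambda>x. (- 1) * w x) (\<lambda>x. (- 1) *\<^sub>R Gw x)"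
    by (rule H10_grad_scale[OF H10_grad_cc1_fun[OF assms(2)]])
  moreover have "(\<lambda>x. (- 1) * w x) = (\<lambda>x. (u x - w x) - u x)" by auto
  ultimately have "(\<lambda>x. (u x - w x) - u x) \<in> H10 (\<Omega> - L)" unfolding H10_def by auto
  moreover have "(\<lambda>x. u x - w x) \<in> H10 \<Omega>" using f unfolding H10_def by blast
  ultimately have "cap_u \<Omega> L u \<le> dir_energy \<Omega> (\<lambda>x. u x - w x)"
    unfolding cap_u_def by (intro Inf_lower) blast
  also have "\<dots> = L2_sqnorm (\<lambda>x. g x - Gw x)" by (rule dir_energy_eq_L2_sqnorm[OF f])
  finally show ?thesis .
qed

lemma concentrates_to_eventually_avoids:
  assumes "concentrates_to Ks K \<Omega>" "open \<Omega>" "K \<subseteq> \<Omega>" "compact C" "C \<subseteq> \<Omega> - K"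
  shows "\<forall>\<^sub>F \<epsilon> in at_right 0. C \<subseteq> \<Omega> - Ks \<epsilon>"
proof -
  have "open (\<Omega> - C)" using assms(2,4) by (simp add: open_Diff compact_imp_closed)
  moreover have "K \<subseteq> \<Omega> - C" using assms(3,5) by blast
  ultimately have "\<exists>e>0. \<forall>\<epsilon>. 0 < \<epsilon> \<and> \<epsilon> < e \<longrightarrow> Ks \<epsilon> \<subseteq> \<Omega> - C"
    using assms(1) unfolding concentrates_to_def by blast
  then show ?thesis unfolding eventually_at_right_field using assms(5) by blast
qed

lemma cap_u_eventually_le:
  fixes \<Omega> K :: "'a::euclidean_space set" and Ks :: "real \<Rightarrow> 'a set"
  assumes "bounded \<Omega>" "open \<Omega>" "K \<subseteq> \<Omega>" "cap \<Omega> K = 0" "concentrates_to Ks K \<Omega>"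
    and "H10_grad \<Omega> v gv" "\<delta> > 0"
  shows "\<forall>\<^sub>F \<epsilon> in at_right 0. \<forall>u gu. H10_grad \<Omega> u gu \<longrightarrow>
    cap_u \<Omega> (Ks \<epsilon>) u \<le> 2 * L2_sqnorm (\<lambda>x. gu x - gv x) + 2 * ennreal \<delta>"
proof -
  obtain w Gw where w: "cc1_fun (\<Omega> - K) w Gw" "L2_sqnorm (\<lambda>x. gv x - Gw x) \<le> ennreal \<delta>"
    using cap_zero_H10_grad_approx[OF assms(1,4,6,7)] by blast
  obtain C where C: "compact C" "C \<subseteq> \<Omega> - K" "\<And>x. x \<notin> C \<Longrightarrow> w x = 0" "\<And>x. x \<notin> C \<Longrightarrow> Gw x = 0"
    using cc1_fun_support[OF w(1)] by blast
  show ?thesis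
    using concentrates_to_eventually_avoids[OF assms(5,2,3) C(1,2)]
  proof eventually_elim
    case (elim \<epsilon>)
    show ?case
    proof (intro allI impI)
      fix u gu assume u: "H10_grad \<Omega> u gu"
      have "cap_u \<Omega> (Ks \<epsilon>) u \<le> L2_sqnorm (\<lambda>x. gu x - Gw x)"
        by (rule cap_u_le_L2_sqnorm[OF u cc1_fun_supported_in[OF w(1) C(1) elim C(3)]])
      also have "\<dots> \<le> 2 * L2_sqnorm (\<lambda>x. gu x - gv x) + 2 * L2_sqnorm (\<lambda>x. gv x - Gw x)"
        using H10_grad_gradient_measurable[OF u] H10_grad_gradient_measurable[OF assms(6)]
          cc1_fun_gradient_measurable[OF w(1)]
        by (intro L2_sqnorm_triangle) (auto intro: order_trans[OF _ norm_triangle_ineq] simp: algebra_simps)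
      also have "\<dots> \<le> 2 * L2_sqnorm (\<lambda>x. gu x - gv x) + 2 * ennreal \<delta>"
        using w(2) by (intro add_mono mult_left_mono) auto
      finally show "cap_u \<Omega> (Ks \<epsilon>) u \<le> 2 * L2_sqnorm (\<lambda>x. gu x - gv x) + 2 * ennreal \<delta>" .
    qed
  qed
qed

lemma chi_sq_eventually_le:
  fixes \<Omega> K :: "'a::euclidean_space set" and Ks :: "real \<Rightarrow> 'a set" and lam :: real
  assumes "bounded \<Omega>" "open \<Omega>" "K \<subseteq> \<Omega>" "cap \<Omega> K = 0" "concentrates_to Ks K \<Omega>" "\<delta> > 0"
  shows "\<forall>\<^sub>F \<epsilon> in at_right 0. chi_sq \<Omega> lam (Ks \<epsilon>) \<le> ennreal (4 * \<delta>)"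
proof -
  define S where "S = {u. u \<in> dirichlet_eigenspace \<Omega> lam \<and> (\<integral>\<^sup>+ x. ennreal ((u x)\<^sup>2) \<partial>lborel) = 1}"
  define grad where "grad u = (SOME g. dirichlet_eigenfunction \<Omega> lam u g)" for u
  have grad: "dirichlet_eigenfunction \<Omega> lam u (grad u)" if "u \<in> S" for u
    using that someI_ex[of "dirichlet_eigenfunction \<Omega> lam u"]
    unfolding S_def grad_def mem_dirichlet_eigenspace_iff by blast
  then have H: "H10_grad \<Omega> u (grad u)" if "u \<in> S" for u
    using that unfolding dirichlet_eigenfunction_def by blast
  obtain F where F: "finite F" "F \<subseteq> S" and net: "\<forall>u\<in>S. \<exists>v\<in>F. \<forall>gu gv.
      dirichlet_eigenfunction \<Omega> lam u gu \<longrightarrow> dirichlet_eigenfunction \<Omega> lam v gv \<longrightarrow>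
      L2_sqnorm (\<lambda>x. gu x - gv x) \<le> ennreal \<delta>"
    using dirichlet_eigenfunctions_finite_energy_net[OF assms(1,2,6), of lam] unfolding S_def by blast
  have "\<forall>\<^sub>F \<epsilon> in at_right 0. \<forall>v\<in>F. \<forall>u gu. H10_grad \<Omega> u gu \<longrightarrow>
      cap_u \<Omega> (Ks \<epsilon>) u \<le> 2 * L2_sqnorm (\<lambda>x. gu x - grad v x) + 2 * ennreal \<delta>"
    using F by (intro eventually_ball_finite ballI cap_u_eventually_le[OF assms(1-5) H assms(6)]) auto
  then show ?thesis
  proof eventually_elim
    case (elim \<epsilon>)
    show ?case unfolding chi_sq_def
    proof (rule Sup_least, clarify)
      fix u assume "u \<in> dirichlet_eigenspace \<Omega> lam" "(\<integral>\<^sup>+ x. ennreal ((u x)\<^sup>2) \<partial>lborel) = 1"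
      then have u: "u \<in> S" unfolding S_def by blast
      then obtain v where v: "v \<in> F" "L2_sqnorm (\<lambda>x. grad u x - grad v x) \<le> ennreal \<delta>"
        using net grad F(2) by blast
      have "cap_u \<Omega> (Ks \<epsilon>) u \<le> 2 * L2_sqnorm (\<lambda>x. grad u x - grad v x) + 2 * ennreal \<delta>"
        using elim v(1) H[OF u] by blast
      also have "\<dots> \<le> 2 * ennreal \<delta> + 2 * ennreal \<delta>"
        using v(2) by (intro add_mono mult_left_mono) auto
      also have "\<dots> = ennreal (4 * \<delta>)"
        using assms(6) by (subst ennreal_numeral_mult_add) auto
      finally show "cap_u \<Omega> (Ks \<epsilon>) u \<le> ennreal (4 * \<delta>)" .
    qed
  qed
qed

theorem lemma3p3:
  fixes \<Omega> K :: "'a::euclidean_space set" and Ks :: "real \<Rightarrow> 'a set" and lam :: real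
  assumes "DIM('a) \<ge> 2"
    and "bounded \<Omega>" and "open \<Omega>"
    and "compact K" and "K \<subseteq> \<Omega>" and "cap \<Omega> K = 0"
    and "\<And>\<epsilon>. \<epsilon> > 0 \<Longrightarrow> compact (Ks \<epsilon>) \<and> Ks \<epsilon> \<subseteq> \<Omega>"
    and "concentrates_to Ks K \<Omega>"
    and "dirichlet_eigenvalue \<Omega> lam"
  shows "((\<lambda>\<epsilon>. chi_sq \<Omega> lam (Ks \<epsilon>)) \<longlongrightarrow> 0) (at_right 0)"
proof (rule order_tendstoI)
  fix a :: ennreal assume "0 < a"
  then obtain \<delta> :: real where \<delta>: "\<delta> > 0" "ennreal (4 * \<delta>) < a"
    using ennreal_positive_obtain_less[of a 4] by auto
  show "\<forall>\<^sub>F \<epsilon> in at_right 0. chi_sq \<Omega> lam (Ks \<epsilon>) < a"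
    using chi_sq_eventually_le[OF assms(2,3,5,6,8) \<delta>(1), of lam]
    by eventually_elim (use \<delta>(2) in auto)
qed simp

end
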